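(* Let ${\cal G}$ be a graph and let $\nu>p\ge1$. For any $\phi\in C^1_{\rm Dir}({\cal G})$, $$\|\nabla\phi\|_p\ge c_{\nu,p}\,\|\phi\|_{p\nu/(\nu-p)},\qquad c_{\nu,p}=I_\nu({\cal G})\,\rho_{\sup}^{-(p-1)/p}\,\frac{\nu-p}{p(\nu-1)}.$$ The same holds when ${\cal G}$ is closed with $\widetilde I_\nu({\cal G})$ in place of $I_\nu({\cal G})$, provided $\phi$ is additionally split.
   Context: A graph ${\cal G}$ consists of an undirected graph $(V,E)$ (possibly infinite; multiple edges, self-loops allowed), edge lengths $\ell_e>0$, boundary vertices $\partial{\cal G}\subseteq V$, a vertex measure ${\cal V}$ (supported on $V$, ${\cal V}(v)>0$), and an edge measure ${\cal E}$ (zero on vertices, $a_e>0$ times Lebesgue measure on the interior of edge $e$); ${\cal G}$ is identified with its geometric realization. $C^1_{\rm Dir}({\cal G})$: continuous functions, uniformly continuously differentiable on each open edge, supported in finitely many vertices and edges, vanishing on $\partial{\cal G}$. Function norms are $L^q({\cal V})$ norms; $\|\nabla\phi\|_p$ is the $L^p({\cal E})$ norm of $|\nabla\phi|$. $\rho_{\sup}=\sup_v{\cal V}(v)^{-1}\sum_{e\ni v}{\cal E}(e)/2$. For open $\Omega$ with finite boundary, ${\cal A}(\partial\Omega)=\sum_{x\in\partial\Omega\setminus V}a_{e(x)}+\sum_{v\in\partial\Omega\cap V}\sum_{e:\,v\in\overline{\Omega\cap e^\circ}}a_e$; $\Omega$ admissible if open, finite boundary, disjoint from $\partial{\cal G}$.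 $I_\nu({\cal G})=\inf_\Omega{\cal A}(\partial\Omega)/{\cal V}(\Omega)^{1/\nu'}$ over admissible $\Omega$ ($\nu'$ dual exponent). Closed graph: finite, $\partial{\cal G}=\emptyset$; split: ${\cal V}(\{\phi>0\}),{\cal V}(\{\phi<0\})\le{\cal V}({\cal G})/2$; $\widetilde I_\nu({\cal G})=\inf_\Omega{\cal A}(\partial\Omega)\min({\cal V}(\Omega),{\cal V}(\complement\Omega))^{(1/\nu)-1}$. *)

theory Defs
  imports "HOL-Analysis.Analysis"
begin

text \<open>A graph: vertex set, edge set (multiple edges and self-loops allowed via the
  endpoint map), edge lengths, edge weights a_e (edge measure = a_e times Lebesgue),
  vertex measure, boundary vertices.\<close>

record ('v, 'e) mgraph =
  verts :: "'v set"
  edges :: "'e set"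
  ends  :: "'e \<Rightarrow> 'v \<times> 'v"
  len   :: "'e \<Rightarrow> real"
  wt    :: "'e \<Rightarrow> real"
  vmeas :: "'v \<Rightarrow> real"
  bdry  :: "'v set"

definition is_graph :: "('v, 'e) mgraph \<Rightarrow> bool" where
  "is_graph G \<longleftrightarrow>
     (\<forall>e\<in>edges G. fst (ends G e) \<in> verts G \<and> snd (ends G e) \<in> verts G
                  \<and> len G e > 0 \<and> wt G e > 0)
   \<and> (\<forall>v\<in>verts G. vmeas G v > 0) \<and> bdry G \<subseteq> verts G"

text \<open>Points of the geometric realization: vertices and interior points of edges.\<close>

datatype ('v, 'e) gpoint = Vx 'v | Ed 'e real

definition pts :: "('v, 'e) mgraph \<Rightarrow> ('v, 'e) gpoint set" where
  "pts G = Vx ` verts G \<union> {Ed e t | e t. e \<in> edges G \<and> 0 < t \<and> t < len G e}"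

definition eint :: "('v, 'e) mgraph \<Rightarrow> 'e \<Rightarrow> ('v, 'e) gpoint set" where
  "eint G e = {Ed e t | t. 0 < t \<and> t < len G e}"

definition param :: "('v, 'e) mgraph \<Rightarrow> 'e \<Rightarrow> real \<Rightarrow> ('v, 'e) gpoint" where
  "param G e t = (if t \<le> 0 then Vx (fst (ends G e))
                  else if len G e \<le> t then Vx (snd (ends G e)) else Ed e t)"

text \<open>Topology of the geometric realization (quotient topology of the closed edges).\<close>

definition gopen :: "('v, 'e) mgraph \<Rightarrow> ('v, 'e) gpoint set \<Rightarrow> bool" where
  "gopen G U \<longleftrightarrow> U \<subseteq> pts G \<and>
     (\<forall>e\<in>edges G. openin (top_of_set {0..len G e}) ({0..len G e} \<inter> param G e -` U))"

definition gclosure :: "('v, 'e) mgraph \<Rightarrow> ('v, 'e) gpoint set \<Rightarrow> ('v, 'e) gpoint set" where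
  "gclosure G S = {x \<in> pts G. \<forall>U. gopen G U \<and> x \<in> U \<longrightarrow> U \<inter> S \<noteq> {}}"

definition ginterior :: "('v, 'e) mgraph \<Rightarrow> ('v, 'e) gpoint set \<Rightarrow> ('v, 'e) gpoint set" where
  "ginterior G S = {x. \<exists>U. gopen G U \<and> x \<in> U \<and> U \<subseteq> S}"

definition gfrontier :: "('v, 'e) mgraph \<Rightarrow> ('v, 'e) gpoint set \<Rightarrow> ('v, 'e) gpoint set" where
  "gfrontier G S = gclosure G S - ginterior G S"

text \<open>Vertex measure of a set of points (the measure is supported on vertices).\<close>

definition vol :: "('v, 'e) mgraph \<Rightarrow> ('v, 'e) gpoint set \<Rightarrow> ennreal" where
  "vol G S = (\<Sum>\<^sub>\<infinity> v \<in> {v \<in> verts G. Vx v \<in> S}. ennreal (vmeas G v))"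

definition bweight :: "('v, 'e) mgraph \<Rightarrow> ('v, 'e) gpoint set \<Rightarrow> ('v, 'e) gpoint \<Rightarrow> ennreal" where
  "bweight G \<Omega> x = (case x of
      Ed e t \<Rightarrow> ennreal (wt G e)
    | Vx v \<Rightarrow> (\<Sum>\<^sub>\<infinity> e \<in> {e \<in> edges G. Vx v \<in> gclosure G (\<Omega> \<inter> eint G e)}. ennreal (wt G e)))"

definition area :: "('v, 'e) mgraph \<Rightarrow> ('v, 'e) gpoint set \<Rightarrow> ennreal" where
  "area G \<Omega> = (\<Sum>x \<in> gfrontier G \<Omega>. bweight G \<Omega> x)"

definition admissible :: "('v, 'e) mgraph \<Rightarrow> ('v, 'e) gpoint set \<Rightarrow> bool" where
  "admissible G \<Omega> \<longleftrightarrow> gopen G \<Omega> \<and> finite (gfrontier G \<Omega>) \<and> \<Omega> \<inter> Vx ` bdry G = {}"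

text \<open>Power with real exponent r >= 0 on [0, infinity], with x^0 = 1.\<close>

definition epow :: "ennreal \<Rightarrow> real \<Rightarrow> ennreal" where
  "epow x r = (if r = 0 then 1 else if x = \<infinity> then \<infinity> else ennreal (enn2real x powr r))"

definition Iso :: "('v, 'e) mgraph \<Rightarrow> real \<Rightarrow> ennreal" where
  "Iso G \<nu> = (INF \<Omega> \<in> {\<Omega>. admissible G \<Omega> \<and> \<Omega> \<noteq> {}}.
                 area G \<Omega> / epow (vol G \<Omega>) (1 - 1 / \<nu>))"

definition closed_graph :: "('v, 'e) mgraph \<Rightarrow> bool" where
  "closed_graph G \<longleftrightarrow> finite (verts G) \<and> finite (edges G) \<and> bdry G = {}"

definition Iso_tilde :: "('v, 'e) mgraph \<Rightarrow> real \<Rightarrow> ennreal" where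
  "Iso_tilde G \<nu> = (INF \<Omega> \<in> {\<Omega>. admissible G \<Omega> \<and> \<Omega> \<noteq> {} \<and> \<Omega> \<noteq> pts G}.
                 area G \<Omega> / epow (min (vol G \<Omega>) (vol G (pts G - \<Omega>))) (1 - 1 / \<nu>))"

definition rho_sup :: "('v, 'e) mgraph \<Rightarrow> ennreal" where
  "rho_sup G = (SUP v \<in> verts G.
      (\<Sum>\<^sub>\<infinity> e \<in> {e \<in> edges G. v = fst (ends G e) \<or> v = snd (ends G e)}.
           ennreal (wt G e * len G e / 2)) / ennreal (vmeas G v))"

definition edge_fun :: "('v, 'e) mgraph \<Rightarrow> (('v, 'e) gpoint \<Rightarrow> real) \<Rightarrow> 'e \<Rightarrow> real \<Rightarrow> real" where
  "edge_fun G \<phi> e t = \<phi> (param G e t)"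

definition vsupp :: "('v, 'e) mgraph \<Rightarrow> (('v, 'e) gpoint \<Rightarrow> real) \<Rightarrow> 'v set" where
  "vsupp G \<phi> = {v \<in> verts G. \<phi> (Vx v) \<noteq> 0}"

definition esupp :: "('v, 'e) mgraph \<Rightarrow> (('v, 'e) gpoint \<Rightarrow> real) \<Rightarrow> 'e set" where
  "esupp G \<phi> = {e \<in> edges G. \<exists>t. 0 < t \<and> t < len G e \<and> \<phi> (Ed e t) \<noteq> 0}"

definition C1_Dir :: "('v, 'e) mgraph \<Rightarrow> (('v, 'e) gpoint \<Rightarrow> real) \<Rightarrow> bool" where
  "C1_Dir G \<phi> \<longleftrightarrow>
     (\<forall>e\<in>edges G. continuous_on {0..len G e} (edge_fun G \<phi> e))
   \<and> (\<forall>e\<in>edges G. \<exists>\<phi>'. (\<forall>t\<in>{0<..<len G e}. (edge_fun G \<phi> e has_real_derivative \<phi>' t) (at t))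
                        \<and> uniformly_continuous_on {0<..<len G e} \<phi>')
   \<and> finite (vsupp G \<phi>) \<and> finite (esupp G \<phi>)
   \<and> (\<forall>v\<in>bdry G. \<phi> (Vx v) = 0)"

definition vnorm :: "('v, 'e) mgraph \<Rightarrow> real \<Rightarrow> (('v, 'e) gpoint \<Rightarrow> real) \<Rightarrow> real" where
  "vnorm G q \<phi> = (\<Sum>v \<in> vsupp G \<phi>. vmeas G v * \<bar>\<phi> (Vx v)\<bar> powr q) powr (1 / q)"

definition grad_norm :: "('v, 'e) mgraph \<Rightarrow> real \<Rightarrow> (('v, 'e) gpoint \<Rightarrow> real) \<Rightarrow> real" where
  "grad_norm G p \<phi> = (\<Sum>e \<in> esupp G \<phi>.
      wt G e * integral {0..len G e} (\<lambda>t. \<bar>deriv (edge_fun G \<phi> e) t\<bar> powr p)) powr (1 / p)"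

definition split_fun :: "('v, 'e) mgraph \<Rightarrow> (('v, 'e) gpoint \<Rightarrow> real) \<Rightarrow> bool" where
  "split_fun G \<phi> \<longleftrightarrow> vol G {x \<in> pts G. \<phi> x > 0} \<le> vol G (pts G) / 2
                     \<and> vol G {x \<in> pts G. \<phi> x < 0} \<le> vol G (pts G) / 2"

definition sob_const :: "ennreal \<Rightarrow> ('v, 'e) mgraph \<Rightarrow> real \<Rightarrow> real \<Rightarrow> ennreal" where
  "sob_const I G \<nu> p = I * inverse (epow (rho_sup G) ((p - 1) / p)) * ennreal ((\<nu> - p) / (p * (\<nu> - 1)))"

end

theory Submission
  imports Defs
begin

text \<open>
  Only the vertex values of a test function \<open>\<phi>\<close> matter: on an edge of length \<open>\<ell>\<close> Jensen's
  inequality bounds the edge integral of \<open>\<bar>\<phi>'\<bar> powr p\<close> from below by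
  \<open>\<ell> powr (1 - p) \<bar>\<phi>(b) - \<phi>(a)\<bar> powr p\<close>. A set \<open>S\<close> of vertices together with the adjacent
  half-edges is an admissible domain whose boundary consists of the midpoints of the edges
  leaving \<open>S\<close>, so the isoperimetric constant bounds the weight of these edges below by a power
  of the mass of \<open>S\<close>. For \<open>p = 1\<close> the layer-cake decomposition of \<open>\<bar>\<phi>\<bar>\<close> turns this into the
  discrete Sobolev inequality; for \<open>p > 1\<close> that inequality is applied to a power of \<open>\<bar>\<phi>\<bar>\<close>
  and Holder's inequality brings in \<open>\<rho>\<^sub>s\<^sub>u\<^sub>p\<close>. For split functions on closed graphs the
  positive and negative parts are supported on at most half the volume and are treated separately.
\<close>

lemma powr_le_tangent_line:
  fixes x A \<theta> :: real
  assumes "0 < \<theta>" "\<theta> \<le> 1" "0 < A" "0 \<le> x"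
  shows "x powr \<theta> \<le> A powr \<theta> + \<theta> * A powr (\<theta> - 1) * (x - A)"
proof (cases "x = 0")
  case True
  have "A powr (\<theta> - 1) * A = A powr \<theta>"
    using assms by (simp add: powr_diff)
  then show ?thesis using True assms
    by (simp add: algebra_simps)
next
  case False
  then have "0 < x" using assms by simp
  then have "x powr \<theta> * A powr (1 - \<theta>) \<le> \<theta> * x + (1 - \<theta>) * A"
    using Youngs_inequality_0[of \<theta> "1 - \<theta>" x A] assms by simp
  then have "A powr (\<theta> - 1) * (x powr \<theta> * A powr (1 - \<theta>)) \<le> A powr (\<theta> - 1) * (\<theta> * x + (1 - \<theta>) * A)"
    by (rule mult_left_mono) simp
  moreover have "A powr (\<theta> - 1) * A powr (1 - \<theta>) = 1"
    using assms by (simp flip: powr_add)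
  moreover have "A powr (\<theta> - 1) * A = A powr \<theta>"
    using assms by (simp add: powr_diff)
  ultimately show ?thesis
    by (simp add: algebra_simps) (metis mult.assoc mult.commute mult.left_commute mult_1)
qed

lemma tangent_line_le_powr:
  fixes x B p :: real
  assumes "1 \<le> p" "0 < B" "0 \<le> x"
  shows "B powr p + p * B powr (p - 1) * (x - B) \<le> x powr p"
proof -
  have "(x powr p) powr (1/p) \<le> (B powr p) powr (1/p) + (1/p) * (B powr p) powr (1/p - 1) * (x powr p - B powr p)"
    by (rule powr_le_tangent_line) (use assms in auto)
  moreover have "(x powr p) powr (1/p) = x" "(B powr p) powr (1/p) = B"
    using assms by (simp_all add: powr_powr)
  moreover have "(B powr p) powr (1/p - 1) = B powr (1 - p)"
    using assms by (simp add: powr_powr algebra_simps)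
  ultimately have "x \<le> B + (1/p) * B powr (1 - p) * (x powr p - B powr p)" by simp
  then have "p * B powr (p - 1) * (x - B) \<le> p * B powr (p - 1) * ((1/p) * B powr (1 - p) * (x powr p - B powr p))"
    using assms by (intro mult_left_mono) auto
  also have "\<dots> = x powr p - B powr p"
  proof -
    have "B powr (p - 1) * B powr (1 - p) = 1" using assms by (simp flip: powr_add)
    then show ?thesis using assms by (simp add: field_simps)
  qed
  finally show ?thesis by simp
qed

lemma powr_le_chord:
  fixes t u s q :: real
  assumes "0 \<le> t" "t \<le> u" "u \<le> s" "t < s" "1 \<le> q"
  shows "u powr q \<le> t powr q + (s powr q - t powr q) * (u - t) / (s - t)"
proof (cases "t = 0")
  case True
  show ?thesis
  proof (cases "u = 0")
    case True then show ?thesis using \<open>t = 0\<close> assms by simp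
  next
    case False
    then have "0 < u" using assms by simp
    have "u powr q = u powr (q - 1) * u" using \<open>0 < u\<close> by (simp add: powr_diff)
    also have "\<dots> \<le> s powr (q - 1) * u"
      using \<open>0 < u\<close> assms by (intro mult_right_mono powr_mono2) auto
    also have "\<dots> = s powr q * u / s" using \<open>0 < u\<close> assms by (simp add: powr_diff)
    finally show ?thesis using True assms by simp
  qed
next
  case False
  define l where "l = (u - t) / (s - t)"
  have l: "0 \<le> l" "l \<le> 1" using assms by (auto simp: l_def field_simps)
  have "l * (s - t) = u - t" using assms by (simp add: l_def)
  then have "u = (1 - l) *\<^sub>R t + l *\<^sub>R s" by (simp add: algebra_simps)
  have "u powr q \<le> (1 - l) * t powr q + l * s powr q"
    using convex_onD[OF powr_convex[OF \<open>1 \<le> q\<close>], of l t s] l \<open>u = _\<close> False assms by simp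
  also have "\<dots> = t powr q + (s powr q - t powr q) * l"
    by (simp add: algebra_simps)
  finally show ?thesis by (simp add: l_def)
qed

text \<open>Integrate the derivative bound \<open>\<gamma> u powr (\<gamma> - 1) = \<gamma> (u powr q) powr \<theta>\<close> over \<open>[t, s]\<close>:
  concavity bounds \<open>z powr \<theta>\<close> by its tangent at the mean \<open>A\<close> of \<open>t powr q\<close> and \<open>s powr q\<close>,
  convexity bounds \<open>u powr q\<close> by its chord, and the resulting quadratic integrates to \<open>A powr \<theta> (s - t)\<close>.\<close>

lemma powr_diff_le_mean_powr:
  fixes t s \<gamma> q :: real
  assumes "0 \<le> t" "t \<le> s" "1 < \<gamma>" "1 \<le> q" "(\<gamma> - 1) / q \<le> 1"
  shows "s powr \<gamma> - t powr \<gamma> \<le> \<gamma> * (s - t) * ((s powr q + t powr q) / 2) powr ((\<gamma> - 1) / q)"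
proof (cases "t = s")
  case True then show ?thesis by simp
next
  case False
  then have ts: "t < s" using assms by simp
  define \<theta> where "\<theta> = (\<gamma> - 1) / q"
  have \<theta>: "0 < \<theta>" "\<theta> \<le> 1" using assms by (auto simp: \<theta>_def)
  define A where "A = (s powr q + t powr q) / 2"
  have "0 < A" using ts assms by (auto simp: A_def intro: add_pos_nonneg)
  define c where "c = (s powr q - t powr q) / (2 * (s - t))"
  define F where "F = (\<lambda>u. A powr \<theta> * (u - t) + \<theta> * A powr (\<theta> - 1) *
      (t powr q * (u - t) + c * (u - t)^2 - A * (u - t)) - (u powr \<gamma> - t powr \<gamma>) / \<gamma>)"
  have "F t \<le> F s"
  proof (rule DERIV_nonneg_imp_increasing_open[OF \<open>t \<le> s\<close>])
    fix u assume u: "t < u" "u < s"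
    then have "0 < u" using assms by simp
    define F' where "F' = A powr \<theta> + \<theta> * A powr (\<theta> - 1) *
          (t powr q + (s powr q - t powr q) * (u - t) / (s - t) - A) - u powr (\<gamma> - 1)"
    have "(F has_real_derivative A powr \<theta> + \<theta> * A powr (\<theta> - 1) *
          (t powr q + c * (2 * (u - t)) - A) - u powr (\<gamma> - 1)) (at u)"
      unfolding F_def using assms \<open>0 < u\<close>
      by (auto intro!: derivative_eq_intros has_real_derivative_powr[OF \<open>0 < u\<close>] simp: algebra_simps)
    moreover have "c * (2 * (u - t)) = (s powr q - t powr q) * (u - t) / (s - t)"
      using ts by (simp add: c_def field_simps)
    ultimately have "(F has_real_derivative F') (at u)" by (simp add: F'_def)
    moreover have "u powr (\<gamma> - 1) = (u powr q) powr \<theta>"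
      using assms by (simp add: powr_powr \<theta>_def)
    moreover have "(u powr q) powr \<theta> \<le> A powr \<theta> + \<theta> * A powr (\<theta> - 1) * (u powr q - A)"
      by (rule powr_le_tangent_line[OF \<theta> \<open>0 < A\<close>]) simp
    moreover have "\<dots> \<le> A powr \<theta> + \<theta> * A powr (\<theta> - 1) *
          (t powr q + (s powr q - t powr q) * (u - t) / (s - t) - A)"
      using powr_le_chord[of t u s q] u assms ts \<theta> \<open>0 < A\<close>
      by (intro add_left_mono mult_left_mono diff_right_mono) auto
    ultimately show "\<exists>y. (F has_real_derivative y) (at u) \<and> 0 \<le> y"
      by (auto simp: F'_def)
  next
    have "continuous_on {t..s} (\<lambda>u. u powr \<gamma>)"
      by (rule continuous_on_powr'[OF continuous_on_id continuous_on_const]) (use assms in auto)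
    then show "continuous_on {t..s} F" unfolding F_def
      using assms by (intro continuous_on_diff continuous_on_add continuous_on_mult continuous_on_const
            continuous_on_id continuous_on_divide continuous_on_power) auto
  qed
  moreover have "F t = 0" by (simp add: F_def)
  moreover have "F s = A powr \<theta> * (s - t) - (s powr \<gamma> - t powr \<gamma>) / \<gamma>"
  proof -
    have "c * (s - t)^2 = (s powr q - t powr q) * (s - t) / 2"
      using ts by (simp add: c_def power2_eq_square field_simps)
    then have "t powr q * (s - t) + c * (s - t)^2 - A * (s - t) = 0"
      by (simp add: A_def algebra_simps add_divide_distrib diff_divide_distrib)
    then show ?thesis by (simp add: F_def)
  qed
  ultimately have "(s powr \<gamma> - t powr \<gamma>) / \<gamma> \<le> A powr \<theta> * (s - t)" by simp
  then show ?thesis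
    using assms by (simp add: A_def \<theta>_def pos_divide_le_eq mult_ac)
qed

lemma abs_powr_diff_le_mean_powr:
  fixes a b \<gamma> q :: real
  assumes "1 < \<gamma>" "1 \<le> q" "(\<gamma> - 1) / q \<le> 1"
  shows "\<bar>\<bar>a\<bar> powr \<gamma> - \<bar>b\<bar> powr \<gamma>\<bar>
           \<le> \<gamma> * \<bar>a - b\<bar> * ((\<bar>a\<bar> powr q + \<bar>b\<bar> powr q) / 2) powr ((\<gamma> - 1) / q)"
proof -
  have *: "\<bar>\<bar>a\<bar> powr \<gamma> - \<bar>b\<bar> powr \<gamma>\<bar>
             \<le> \<gamma> * \<bar>a - b\<bar> * ((\<bar>a\<bar> powr q + \<bar>b\<bar> powr q) / 2) powr ((\<gamma> - 1) / q)"
    if "\<bar>b\<bar> \<le> \<bar>a\<bar>" for a b :: real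
  proof -
    have "\<bar>\<bar>a\<bar> powr \<gamma> - \<bar>b\<bar> powr \<gamma>\<bar> = \<bar>a\<bar> powr \<gamma> - \<bar>b\<bar> powr \<gamma>"
      using that assms by (simp add: powr_mono2)
    also have "\<dots> \<le> \<gamma> * (\<bar>a\<bar> - \<bar>b\<bar>) * ((\<bar>a\<bar> powr q + \<bar>b\<bar> powr q) / 2) powr ((\<gamma> - 1) / q)"
      using powr_diff_le_mean_powr[of "\<bar>b\<bar>" "\<bar>a\<bar>" \<gamma> q] that assms by simp
    also have "\<dots> \<le> \<gamma> * \<bar>a - b\<bar> * ((\<bar>a\<bar> powr q + \<bar>b\<bar> powr q) / 2) powr ((\<gamma> - 1) / q)"
      using assms by (intro mult_right_mono mult_left_mono) auto
    finally show ?thesis .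
  qed
  show ?thesis
  proof (cases "\<bar>b\<bar> \<le> \<bar>a\<bar>")
    case True then show ?thesis by (rule *)
  next
    case False
    then show ?thesis using *[of a b] by (simp add: abs_minus_commute add.commute)
  qed
qed

lemma Holder_inequality_sum:
  fixes c f h :: "'a \<Rightarrow> real" and P Q :: real
  assumes "finite I" and nonneg: "\<And>i. i \<in> I \<Longrightarrow> 0 \<le> c i \<and> 0 \<le> f i \<and> 0 \<le> h i"
    and PQ: "1 < P" "1 < Q" "1/P + 1/Q = 1"
  shows "(\<Sum>i\<in>I. c i * f i * h i)
           \<le> (\<Sum>i\<in>I. c i * f i powr P) powr (1/P) * (\<Sum>i\<in>I. c i * h i powr Q) powr (1/Q)"
proof -
  define F where "F = (\<Sum>i\<in>I. c i * f i powr P)"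
  define H where "H = (\<Sum>i\<in>I. c i * h i powr Q)"
  have "0 \<le> F" "0 \<le> H" using nonneg by (auto simp: F_def H_def intro!: sum_nonneg)
  show ?thesis
  proof (cases "F = 0 \<or> H = 0")
    case True
    have "c i * f i * h i = 0" if "i \<in> I" for i
    proof -
      have "c i * f i powr P = 0 \<or> c i * h i powr Q = 0"
        using True \<open>finite I\<close> nonneg that by (auto simp: F_def H_def sum_nonneg_eq_0_iff)
      then show ?thesis by auto
    qed
    then have "(\<Sum>i\<in>I. c i * f i * h i) = 0" by (intro sum.neutral) blast
    then show ?thesis by (simp flip: F_def H_def)
  next
    case False
    then have "0 < F" "0 < H" using \<open>0 \<le> F\<close> \<open>0 \<le> H\<close> by auto
    define a where "a = F powr (1/P)"
    define b where "b = H powr (1/Q)"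
    have "0 < a" "0 < b" using \<open>0 < F\<close> \<open>0 < H\<close> by (auto simp: a_def b_def)
    have "a powr P = F" "b powr Q = H"
      using \<open>0 < F\<close> \<open>0 < H\<close> PQ by (simp_all add: a_def b_def powr_powr)
    have Young: "c i * (f i / a) * (h i / b) \<le> c i * ((f i powr P / F) / P + (h i powr Q / H) / Q)"
      if "i \<in> I" for i
    proof -
      have "(f i / a) * (h i / b) \<le> (f i / a) powr P / P + (h i / b) powr Q / Q"
        using Youngs_inequality[OF PQ, of "f i / a" "h i / b"] nonneg[OF that] \<open>0 < a\<close> \<open>0 < b\<close>
        by simp
      also have "\<dots> = (f i powr P / F) / P + (h i powr Q / H) / Q"
        using \<open>0 < a\<close> \<open>0 < b\<close> nonneg[OF that] \<open>a powr P = F\<close> \<open>b powr Q = H\<close>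
        by (simp add: powr_divide)
      finally show ?thesis using nonneg[OF that] by (metis mult_left_mono times_divide_eq_right mult.assoc)
    qed
    have "(\<Sum>i\<in>I. c i * f i * h i) / (a * b) = (\<Sum>i\<in>I. c i * (f i / a) * (h i / b))"
      by (simp add: sum_divide_distrib)
    also have "\<dots> \<le> (\<Sum>i\<in>I. c i * ((f i powr P / F) / P + (h i powr Q / H) / Q))"
      by (rule sum_mono) (rule Young)
    also have "\<dots> = (\<Sum>i\<in>I. c i * f i powr P) / F / P + (\<Sum>i\<in>I. c i * h i powr Q) / H / Q"
      by (simp add: algebra_simps sum.distrib sum_divide_distrib)
    also have "\<dots> = 1" using \<open>0 < F\<close> \<open>0 < H\<close> PQ by (simp flip: F_def H_def)
    finally show ?thesis using \<open>0 < a\<close> \<open>0 < b\<close> by (simp add: divide_le_eq a_def b_def F_def H_def)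
  qed
qed

lemma powr_add_le_add_powr:
  fixes a b \<theta> :: real
  assumes "0 \<le> a" "0 \<le> b" "0 < \<theta>" "\<theta> \<le> 1"
  shows "(a + b) powr \<theta> \<le> a powr \<theta> + b powr \<theta>"
proof (cases "a + b = 0")
  case True then show ?thesis using assms by simp
next
  case False
  then have "0 < a + b" using assms by simp
  have *: "c * (a + b) powr (\<theta> - 1) \<le> c powr \<theta>" if "0 \<le> c" "c \<le> a + b" for c
  proof (cases "c = 0")
    case False
    then have "0 < c" using that by simp
    have "(a + b) powr (\<theta> - 1) \<le> c powr (\<theta> - 1)"
      using \<open>0 < c\<close> that assms by (intro powr_mono2') auto
    then have "c * (a + b) powr (\<theta> - 1) \<le> c * c powr (\<theta> - 1)" using \<open>0 < c\<close> by simp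
    also have "\<dots> = c powr \<theta>" using \<open>0 < c\<close> by (simp add: powr_diff)
    finally show ?thesis .
  qed simp
  have "(a + b) * (a + b) powr (\<theta> - 1) = (a + b) powr \<theta>"
    using \<open>0 < a + b\<close> by (simp add: powr_diff)
  then have "(a + b) powr \<theta> = a * (a + b) powr (\<theta> - 1) + b * (a + b) powr (\<theta> - 1)"
    by (simp add: algebra_simps)
  also have "\<dots> \<le> a powr \<theta> + b powr \<theta>"
    using *[of a] *[of b] assms by (intro add_mono) auto
  finally show ?thesis .
qed

lemma add_powr_le_powr_add:
  fixes a b p :: real
  assumes "0 \<le> a" "0 \<le> b" "1 \<le> p"
  shows "a powr p + b powr p \<le> (a + b) powr p"
proof -
  have "(a powr p + b powr p) powr (1/p) \<le> (a powr p) powr (1/p) + (b powr p) powr (1/p)"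
    by (rule powr_add_le_add_powr) (use assms in auto)
  also have "\<dots> = a + b" using assms by (simp add: powr_powr)
  finally have "((a powr p + b powr p) powr (1/p)) powr p \<le> (a + b) powr p"
    using assms by (intro powr_mono2) auto
  then show ?thesis using assms by (simp add: powr_powr)
qed

lemma powr_bound_add:
  fixes K C p q A B D D' :: real
  assumes "0 \<le> K" "0 \<le> C" "1 \<le> p" "p \<le> q" "0 \<le> A" "0 \<le> B" "0 \<le> D" "0 \<le> D'"
    and A: "K * A powr (1/q) \<le> C * D powr (1/p)" and B: "K * B powr (1/q) \<le> C * D' powr (1/p)"
  shows "K * (A + B) powr (1/q) \<le> C * (D + D') powr (1/p)"
proof -
  have raise: "K powr p * X powr (p/q) \<le> C powr p * Y"
    if "0 \<le> X" "0 \<le> Y" "K * X powr (1/q) \<le> C * Y powr (1/p)" for X Y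
  proof -
    have "(K * X powr (1/q)) powr p \<le> (C * Y powr (1/p)) powr p"
      using that assms by (intro powr_mono2) auto
    then show ?thesis using that assms by (simp add: powr_mult powr_powr)
  qed
  have "(K * (A + B) powr (1/q)) powr p = K powr p * (A + B) powr (p/q)"
    using assms by (simp add: powr_mult powr_powr)
  also have "\<dots> \<le> K powr p * (A powr (p/q) + B powr (p/q))"
    using assms by (intro mult_left_mono powr_add_le_add_powr) auto
  also have "\<dots> \<le> C powr p * (D + D')"
    using raise[OF _ _ A] raise[OF _ _ B] assms by (simp add: algebra_simps)
  finally have "(K * (A + B) powr (1/q)) powr p \<le> C powr p * (D + D')" .
  then have "((K * (A + B) powr (1/q)) powr p) powr (1/p) \<le> (C powr p * (D + D')) powr (1/p)"
    using assms by (intro powr_mono2) auto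
  then show ?thesis using assms by (simp add: powr_mult powr_powr)
qed

text \<open>Jensen's inequality for \<open>\<bar>f'\<bar> powr p\<close> on \<open>[0, L]\<close>, proved with the supporting line of
  \<open>z powr p\<close> at the mean value \<open>B\<close> of \<open>\<bar>f'\<bar>\<close>.\<close>

lemma increment_powr_le_integral_deriv:
  fixes f f' :: "real \<Rightarrow> real" and L p :: real
  assumes "0 < L" "1 \<le> p" and cont: "continuous_on {0..L} f"
    and der: "\<And>t. t \<in> {0<..<L} \<Longrightarrow> (f has_real_derivative f' t) (at t)"
    and uc: "uniformly_continuous_on {0<..<L} f'"
  shows "L powr (1 - p) * \<bar>f L - f 0\<bar> powr p \<le> integral {0..L} (\<lambda>t. \<bar>deriv f t\<bar> powr p)"
proof -
  obtain g where g: "uniformly_continuous_on (closure {0<..<L}) g" "\<And>x. x \<in> {0<..<L} \<Longrightarrow> f' x = g x"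
    using uniformly_continuous_on_extension_on_closure[OF uc] by metis
  have "continuous_on {0..L} g"
    using g(1) \<open>0 < L\<close> uniformly_continuous_imp_continuous by fastforce
  have "deriv f t = g t" if "t \<in> {0<..<L}" for t
    using DERIV_imp_deriv[OF der[OF that]] g(2)[OF that] by simp
  then have int_eq: "integral {0..L} (\<lambda>t. \<bar>deriv f t\<bar> powr p) = integral {0..L} (\<lambda>t. \<bar>g t\<bar> powr p)"
    by (intro integral_spike[of "{0, L}"]) auto
  have ftc: "(g has_integral (f L - f 0)) {0..L}"
  proof (rule fundamental_theorem_of_calculus_interior)
    fix x assume "x \<in> {0<..<L}"
    then show "(f has_vector_derivative g x) (at x)"
      using der g(2) by (simp add: has_real_derivative_iff_has_vector_derivative[symmetric])
  qed (use \<open>0 < L\<close> cont in auto)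
  define I where "I = integral {0..L} (\<lambda>t. \<bar>g t\<bar>)"
  have int_abs: "(\<lambda>t. \<bar>g t\<bar>) integrable_on {0..L}"
    by (intro integrable_continuous_interval continuous_intros \<open>continuous_on {0..L} g\<close>)
  have int_p: "(\<lambda>t. \<bar>g t\<bar> powr p) integrable_on {0..L}"
    by (intro integrable_continuous_interval continuous_on_powr' continuous_intros
        \<open>continuous_on {0..L} g\<close>) (use \<open>1 \<le> p\<close> in auto)
  have "norm (integral {0..L} g) \<le> I" unfolding I_def
    by (rule integral_norm_bound_integral) (use ftc int_abs in auto)
  then have "\<bar>f L - f 0\<bar> \<le> I" using ftc by (simp add: integral_unique)
  have "L powr (1 - p) * I powr p \<le> integral {0..L} (\<lambda>t. \<bar>g t\<bar> powr p)"
  proof (cases "I = 0")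
    case True
    then show ?thesis
      using \<open>1 \<le> p\<close> integral_nonneg[OF int_p] by simp
  next
    case False
    define B where "B = I / L"
    have "0 < B" using False \<open>\<bar>f L - f 0\<bar> \<le> I\<close> \<open>0 < L\<close> by (simp add: B_def)
    have "((\<lambda>t. \<bar>g t\<bar> - B) has_integral (I - L * B)) {0..L}"
      using has_integral_diff[OF int_abs[unfolded has_integral_integral] has_integral_const_real[of B 0 L]] \<open>0 < L\<close>
      by (simp add: I_def)
    from has_integral_add[OF has_integral_const_real[of "B powr p" 0 L]
        has_integral_mult_right[OF this, of "p * B powr (p - 1)"]]
    have "((\<lambda>t. B powr p + p * B powr (p - 1) * (\<bar>g t\<bar> - B)) has_integral
        (L * B powr p + p * B powr (p - 1) * (I - L * B))) {0..L}"
      using \<open>0 < L\<close> by simp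
    then have "L * B powr p + p * B powr (p - 1) * (I - L * B) \<le> integral {0..L} (\<lambda>t. \<bar>g t\<bar> powr p)"
      by (rule has_integral_le[OF _ int_p[unfolded has_integral_integral]])
         (rule tangent_line_le_powr[OF \<open>1 \<le> p\<close> \<open>0 < B\<close>], simp)
    moreover have "I - L * B = 0" "L * B powr p = L powr (1 - p) * I powr p"
      using \<open>0 < L\<close> \<open>0 < B\<close> by (simp_all add: B_def powr_divide powr_diff field_simps)
    ultimately show ?thesis by simp
  qed
  moreover have "L powr (1 - p) * \<bar>f L - f 0\<bar> powr p \<le> L powr (1 - p) * I powr p"
    using \<open>\<bar>f L - f 0\<bar> \<le> I\<close> \<open>1 \<le> p\<close> by (intro mult_left_mono powr_mono2) auto
  ultimately show ?thesis using int_eq by simp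
qed

lemma sum_endpoints_eq_sum_incident:
  fixes h :: "'v \<Rightarrow> real" and c :: "'e \<Rightarrow> real"
  assumes "finite V" "finite E"
    and no_loops: "\<And>e. e \<in> E \<Longrightarrow> a e \<noteq> b e"
    and h: "\<And>v. v \<notin> V \<Longrightarrow> h v = 0"
  shows "(\<Sum>e\<in>E. c e * (h (a e) + h (b e))) = (\<Sum>v\<in>V. h v * (\<Sum>e\<in>{e\<in>E. a e = v \<or> b e = v}. c e))"
proof -
  have "(\<Sum>e\<in>E. c e * (h (a e) + h (b e))) = (\<Sum>e\<in>E. \<Sum>v\<in>V. of_bool (a e = v \<or> b e = v) * (c e * h v))"
  proof (rule sum.cong[OF refl])
    fix e assume "e \<in> E"
    have "(\<Sum>v\<in>V. of_bool (a e = v \<or> b e = v) * (c e * h v)) =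
          (\<Sum>v\<in>V. (if v = a e then c e * h v else 0) + (if v = b e then c e * h v else 0))"
      using no_loops[OF \<open>e \<in> E\<close>] by (intro sum.cong) auto
    also have "\<dots> = c e * (h (a e) + h (b e))"
      using \<open>finite V\<close> h[of "a e"] h[of "b e"] by (simp add: sum.distrib algebra_simps)
    finally show "c e * (h (a e) + h (b e)) = (\<Sum>v\<in>V. of_bool (a e = v \<or> b e = v) * (c e * h v))" ..
  qed
  also have "\<dots> = (\<Sum>v\<in>V. \<Sum>e\<in>E. of_bool (a e = v \<or> b e = v) * (c e * h v))"
    by (rule sum.swap)
  also have "\<dots> = (\<Sum>v\<in>V. h v * (\<Sum>e\<in>{e\<in>E. a e = v \<or> b e = v}. c e))"
  proof (rule sum.cong[OF refl])
    fix v
    have "(\<Sum>e\<in>E. of_bool (a e = v \<or> b e = v) * (c e * h v)) =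
          (\<Sum>e\<in>E. if a e = v \<or> b e = v then h v * c e else 0)"
      by (intro sum.cong) auto
    also have "\<dots> = (\<Sum>e\<in>{e\<in>E. a e = v \<or> b e = v}. h v * c e)"
      using \<open>finite E\<close> by (simp add: sum.inter_filter)
    also have "\<dots> = h v * (\<Sum>e\<in>{e\<in>E. a e = v \<or> b e = v}. c e)"
      by (simp add: sum_distrib_left)
    finally show "(\<Sum>e\<in>E. of_bool (a e = v \<or> b e = v) * (c e * h v)) =
          h v * (\<Sum>e\<in>{e\<in>E. a e = v \<or> b e = v}. c e)" .
  qed
  finally show ?thesis .
qed

section \<open>Sobolev inequalities on finite weighted networks\<close>

locale finite_network =
  fixes V :: "'v set" and E :: "'e set" and src tgt :: "'e \<Rightarrow> 'v"
    and m :: "'v \<Rightarrow> real" and w :: "'e \<Rightarrow> real"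
  assumes finite_V: "finite V" and finite_E: "finite E"
    and m_nonneg: "v \<in> V \<Longrightarrow> 0 \<le> m v" and w_nonneg: "e \<in> E \<Longrightarrow> 0 \<le> w e"
begin

definition variation :: "('v \<Rightarrow> real) \<Rightarrow> real" where
  "variation y = (\<Sum>e\<in>E. w e * \<bar>y (tgt e) - y (src e)\<bar>)"

definition energy :: "('e \<Rightarrow> real) \<Rightarrow> real \<Rightarrow> ('v \<Rightarrow> real) \<Rightarrow> real" where
  "energy L p x = (\<Sum>e\<in>E. w e * (L e powr (1 - p) * \<bar>x (tgt e) - x (src e)\<bar> powr p))"

definition lp_norm :: "real \<Rightarrow> ('v \<Rightarrow> real) \<Rightarrow> real" where
  "lp_norm q x = (\<Sum>v\<in>V. m v * \<bar>x v\<bar> powr q) powr (1 / q)"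

definition isoperimetric :: "real \<Rightarrow> real \<Rightarrow> bool" where
  "isoperimetric K \<nu> \<longleftrightarrow>
     (\<forall>S\<subseteq>V. S \<noteq> {} \<longrightarrow> K * (\<Sum>v\<in>S. m v) powr (1 - 1 / \<nu>) \<le> variation (indicator S))"

lemma variation_nonneg: "0 \<le> variation y"
  unfolding variation_def by (auto intro!: sum_nonneg mult_nonneg_nonneg w_nonneg)

lemma energy_nonneg: "0 \<le> energy L p x"
  unfolding energy_def by (auto intro!: sum_nonneg mult_nonneg_nonneg w_nonneg)

text \<open>Layer-cake induction: remove the lowest positive level \<open>y\<^sub>1\<close> of \<open>y\<close>. The functions
  \<open>y\<^sub>1 \<cdot> indicator {y > 0}\<close> and \<open>max (y - y\<^sub>1) 0\<close> increase along the same edges, so the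
  variation of \<open>y\<close> is the sum of theirs.\<close>

lemma coarea_bound:
  assumes "0 \<le> C"
    and levels: "\<And>S. S \<subseteq> V \<Longrightarrow> S \<noteq> {} \<Longrightarrow> (\<Sum>v\<in>S. g v) \<le> C * variation (indicator S)"
  shows "\<lbrakk>\<And>v. 0 \<le> y v; \<And>v. 0 < y v \<Longrightarrow> v \<in> V\<rbrakk> \<Longrightarrow> (\<Sum>v\<in>V. y v * g v) \<le> C * variation y"
proof (induction "card (y ` {v\<in>V. 0 < y v})" arbitrary: y rule: less_induct)
  case less
  define T where "T = y ` {v\<in>V. 0 < y v}"
  have "finite T" using finite_V by (simp add: T_def)
  show ?case
  proof (cases "T = {}")
    case True
    then have "y = (\<lambda>_. 0)" using less.prems by (force simp: T_def order.order_iff_strict)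
    then show ?thesis by (simp add: variation_def)
  next
    case False
    define y\<^sub>1 where "y\<^sub>1 = Min T"
    define S where "S = {v\<in>V. 0 < y v}"
    define y' where "y' = (\<lambda>v. max (y v - y\<^sub>1) 0)"
    have "y\<^sub>1 \<in> T" using False \<open>finite T\<close> by (simp add: y\<^sub>1_def)
    then have "0 < y\<^sub>1" by (auto simp: T_def)
    have y\<^sub>1_le: "y\<^sub>1 \<le> y v" if "0 < y v" for v
      using that less.prems \<open>finite T\<close> by (auto simp: y\<^sub>1_def T_def intro!: Min_le)
    have S_iff: "v \<in> S \<longleftrightarrow> 0 < y v" for v using less.prems by (auto simp: S_def)
    have decomp: "y v = y\<^sub>1 * indicator S v + y' v" for v
      using y\<^sub>1_le[of v] less.prems(1)[of v] S_iff[of v] \<open>0 < y\<^sub>1\<close> by (auto simp: y'_def)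
    have "y' ` {v\<in>V. 0 < y' v} \<subseteq> (\<lambda>t. t - y\<^sub>1) ` (T - {y\<^sub>1})"
    proof
      fix z assume "z \<in> y' ` {v\<in>V. 0 < y' v}"
      then obtain v where "v \<in> V" "0 < y' v" "z = y' v" by auto
      then have "y\<^sub>1 < y v" "z = y v - y\<^sub>1" by (auto simp: y'_def)
      then show "z \<in> (\<lambda>t. t - y\<^sub>1) ` (T - {y\<^sub>1})" using \<open>v \<in> V\<close> \<open>0 < y\<^sub>1\<close> by (auto simp: T_def)
    qed
    then have "card (y' ` {v\<in>V. 0 < y' v}) \<le> card (T - {y\<^sub>1})"
      using \<open>finite T\<close> by (meson card_image_le card_mono finite_Diff finite_imageI order_trans)
    also have "\<dots> < card T" using \<open>finite T\<close> \<open>y\<^sub>1 \<in> T\<close> by (metis card_Diff1_less)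
    finally have IH: "(\<Sum>v\<in>V. y' v * g v) \<le> C * variation y'"
      using less.prems \<open>0 < y\<^sub>1\<close> by (intro less.hyps) (auto simp: T_def y'_def)
    have "S \<subseteq> V" "S \<noteq> {}" using False by (auto simp: S_def T_def)
    have edge: "\<bar>y (tgt e) - y (src e)\<bar>
        = y\<^sub>1 * \<bar>indicator S (tgt e) - indicator S (src e)\<bar> + \<bar>y' (tgt e) - y' (src e)\<bar>" for e
      using decomp[of "tgt e"] decomp[of "src e"] S_iff[of "tgt e"] S_iff[of "src e"] \<open>0 < y\<^sub>1\<close>
      by (auto simp: y'_def indicator_def)
    have "(\<Sum>v\<in>V. y v * g v) = y\<^sub>1 * (\<Sum>v\<in>V. indicator S v * g v) + (\<Sum>v\<in>V. y' v * g v)"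
      by (simp add: decomp algebra_simps sum.distrib sum_distrib_left)
    also have "(\<Sum>v\<in>V. indicator S v * g v) = (\<Sum>v\<in>S. g v)"
      using finite_V \<open>S \<subseteq> V\<close> by (simp add: indicator_def if_distrib sum.inter_restrict[symmetric] Int_absorb1 cong: if_cong)
    also have "y\<^sub>1 * (\<Sum>v\<in>S. g v) + (\<Sum>v\<in>V. y' v * g v)
        \<le> y\<^sub>1 * (C * variation (indicator S)) + C * variation y'"
      using levels[OF \<open>S \<subseteq> V\<close> \<open>S \<noteq> {}\<close>] IH \<open>0 < y\<^sub>1\<close> by (intro add_mono mult_left_mono) auto
    also have "\<dots> = C * variation y"
      by (simp add: variation_def edge algebra_simps sum.distrib sum_distrib_left)
    finally show ?thesis .
  qed
qed

lemma variation_abs_le: "variation (\<lambda>v. \<bar>x v\<bar>) \<le> variation x"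
  unfolding variation_def
  by (intro sum_mono mult_left_mono) (auto simp: abs_triangle_ineq3 w_nonneg)

text \<open>Duality: \<open>g = (y / N) powr (r - 1)\<close> has unit \<open>L\<^sup>\<nu>\<close> norm, so by Holder the
  isoperimetric inequality gives the level-set hypothesis of \<open>coarea_bound\<close>
  with weights \<open>m \<cdot> g\<close>, and testing \<open>y\<close> against \<open>g\<close> returns \<open>N\<close>.\<close>

lemma sobolev_L1:
  assumes iso: "isoperimetric K \<nu>" and "0 < K" "1 < \<nu>" and supp: "\<And>v. x v \<noteq> 0 \<Longrightarrow> v \<in> V"
  shows "K * lp_norm (\<nu> / (\<nu> - 1)) x \<le> variation x"
proof -
  define r where "r = \<nu> / (\<nu> - 1)"
  have r: "1 < r" "1/r + 1/\<nu> = 1" "1/r = 1 - 1/\<nu>" "(r - 1) * \<nu> = r"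
    using \<open>1 < \<nu>\<close> by (auto simp: r_def field_simps)
  define y where "y = (\<lambda>v. \<bar>x v\<bar>)"
  define N where "N = lp_norm r y"
  have "0 \<le> y v" for v by (simp add: y_def)
  have N_powr: "N powr r = (\<Sum>v\<in>V. m v * y v powr r)"
    using r(1) m_nonneg by (simp add: N_def lp_norm_def y_def powr_powr sum_nonneg)
  have "K * N \<le> variation y"
  proof (cases "N = 0")
    case True then show ?thesis using variation_nonneg by simp
  next
    case False
    then have "0 < N" by (simp add: N_def lp_norm_def)
    define g where "g = (\<lambda>v. y v powr (r - 1) / N powr (r - 1))"
    have "0 \<le> g v" for v by (simp add: g_def)
    have "g v powr \<nu> = y v powr r / N powr r" for v
      using \<open>0 < N\<close> r by (simp add: g_def y_def powr_divide powr_powr)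
    then have g_norm: "(\<Sum>v\<in>V. m v * g v powr \<nu>) = 1"
      using \<open>0 < N\<close> N_powr by (simp add: sum_divide_distrib[symmetric]) (metis powr_gt_zero less_irrefl)
    have "(\<Sum>v\<in>S. m v * g v) \<le> (1/K) * variation (indicator S)" if "S \<subseteq> V" "S \<noteq> {}" for S
    proof -
      have "finite S" using that finite_V finite_subset by blast
      have "(\<Sum>v\<in>S. m v * g v powr \<nu>) \<le> 1"
        using g_norm sum_mono2[OF finite_V \<open>S \<subseteq> V\<close>, of "\<lambda>v. m v * g v powr \<nu>"] m_nonneg by force
      moreover have "0 \<le> (\<Sum>v\<in>S. m v * g v powr \<nu>)"
        using that m_nonneg by (auto intro!: sum_nonneg)
      ultimately have g_S: "(\<Sum>v\<in>S. m v * g v powr \<nu>) powr (1/\<nu>) \<le> 1"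
        using powr_mono2[of "1/\<nu>" _ 1] \<open>1 < \<nu>\<close> by fastforce
      have "(\<Sum>v\<in>S. m v * g v) = (\<Sum>v\<in>S. m v * 1 * g v)" by simp
      also have "\<dots> \<le> (\<Sum>v\<in>S. m v * 1 powr r) powr (1/r) * (\<Sum>v\<in>S. m v * g v powr \<nu>) powr (1/\<nu>)"
        by (rule Holder_inequality_sum[OF \<open>finite S\<close> _ r(1) \<open>1 < \<nu>\<close> r(2)])
           (use that m_nonneg \<open>\<And>v. 0 \<le> g v\<close> in auto)
      also have "\<dots> \<le> (\<Sum>v\<in>S. m v) powr (1 - 1/\<nu>)"
        using g_S r(3) by (simp add: mult_left_le)
      also have "\<dots> \<le> (1/K) * variation (indicator S)"
        using iso that \<open>0 < K\<close> by (simp add: isoperimetric_def field_simps)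
      finally show ?thesis .
    qed
    then have "(\<Sum>v\<in>V. y v * (m v * g v)) \<le> (1/K) * variation y"
      using \<open>0 < K\<close> supp by (intro coarea_bound) (auto simp: y_def)
    moreover have "y v powr r = y v * y v powr (r - 1)" for v
      using r by (cases "y v = 0") (auto simp: y_def powr_diff)
    then have "(\<Sum>v\<in>V. y v * (m v * g v)) = N powr r / N powr (r - 1)"
      by (simp add: N_powr g_def sum_divide_distrib mult.left_commute)
    also have "\<dots> = N" using \<open>0 < N\<close> by (simp add: powr_diff)
    ultimately show ?thesis using \<open>0 < K\<close> by (simp add: field_simps)
  qed
  then show ?thesis
    using variation_abs_le[of x] by (simp add: N_def y_def r_def lp_norm_def)
qed

lemma variation_abs_powr_le:
  fixes L :: "'e \<Rightarrow> real"
  assumes "1 < \<gamma>" "1 \<le> q" "1 < p" and exponents: "(\<gamma> - 1) / q = (p - 1) / p"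
    and L: "\<And>e. e \<in> E \<Longrightarrow> 0 < L e"
  shows "variation (\<lambda>v. \<bar>x v\<bar> powr \<gamma>)
     \<le> \<gamma> * energy L p x powr (1/p) *
        (\<Sum>e\<in>{e\<in>E. src e \<noteq> tgt e}.
           w e * L e * ((\<bar>x (src e)\<bar> powr q + \<bar>x (tgt e)\<bar> powr q) / 2)) powr ((p - 1) / p)"
proof -
  define b where "b = (p - 1) / p"
  define p' where "p' = p / (p - 1)"
  define E' where "E' = {e\<in>E. src e \<noteq> tgt e}"
  define dx where "dx = (\<lambda>e. \<bar>x (tgt e) - x (src e)\<bar>)"
  define M where "M = (\<lambda>e. (\<bar>x (src e)\<bar> powr q + \<bar>x (tgt e)\<bar> powr q) / 2)"
  have b: "0 < b" "b < 1" "b * p' = 1" "1/p' = b"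
    using \<open>1 < p\<close> by (auto simp: b_def p'_def field_simps)
  have p': "1 < p'" "1/p + 1/p' = 1" using \<open>1 < p\<close> by (auto simp: p'_def field_simps)
  have "finite E'" using finite_E by (simp add: E'_def)
  have E'_sub: "e \<in> E' \<Longrightarrow> e \<in> E" for e by (simp add: E'_def)
  have "variation (\<lambda>v. \<bar>x v\<bar> powr \<gamma>) = (\<Sum>e\<in>E'. w e * \<bar>\<bar>x (tgt e)\<bar> powr \<gamma> - \<bar>x (src e)\<bar> powr \<gamma>\<bar>)"
    unfolding variation_def by (rule sum.mono_neutral_right[OF finite_E]) (auto simp: E'_def)
  also have "\<dots> \<le> (\<Sum>e\<in>E'. w e * (\<gamma> * dx e * M e powr b))"
  proof (intro sum_mono mult_left_mono)
    fix e assume "e \<in> E'"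
    show "\<bar>\<bar>x (tgt e)\<bar> powr \<gamma> - \<bar>x (src e)\<bar> powr \<gamma>\<bar> \<le> \<gamma> * dx e * M e powr b"
      using abs_powr_diff_le_mean_powr[of \<gamma> q "x (tgt e)" "x (src e)"] assms b
      by (simp add: dx_def M_def b_def add.commute)
    show "0 \<le> w e" using E'_sub \<open>e \<in> E'\<close> w_nonneg by blast
  qed
  also have "\<dots> = \<gamma> * (\<Sum>e\<in>E'. w e * (L e powr (- b) * dx e) * (L e powr b * M e powr b))"
  proof -
    have "L e powr (- b) * L e powr b = 1" if "e \<in> E'" for e
      using L[OF E'_sub[OF that]] by (simp flip: powr_add)
    then show ?thesis
      by (simp add: sum_distrib_left) (intro sum.cong refl, simp add: algebra_simps)
  qed
  also have "\<dots> \<le> \<gamma> * ((\<Sum>e\<in>E'. w e * (L e powr (- b) * dx e) powr p) powr (1/p)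
                      * (\<Sum>e\<in>E'. w e * (L e powr b * M e powr b) powr p') powr (1/p'))"
    using \<open>1 < \<gamma>\<close> w_nonneg E'_sub
    by (intro mult_left_mono Holder_inequality_sum[OF \<open>finite E'\<close> _ \<open>1 < p\<close> p']) (auto simp: dx_def M_def)
  also have "\<dots> \<le> \<gamma> * (energy L p x powr (1/p) * (\<Sum>e\<in>E'. w e * L e * M e) powr b)"
  proof (intro mult_left_mono mult_mono)
    have "- b * p = 1 - p" using \<open>1 < p\<close> by (simp add: b_def field_simps)
    then have "(\<Sum>e\<in>E'. w e * (L e powr (- b) * dx e) powr p)
        = (\<Sum>e\<in>E'. w e * (L e powr (1 - p) * \<bar>x (tgt e) - x (src e)\<bar> powr p))"
      using L E'_sub by (intro sum.cong refl) (simp add: powr_mult powr_powr dx_def)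
    also have "\<dots> \<le> energy L p x"
      unfolding energy_def using w_nonneg E'_sub by (intro sum_mono2[OF finite_E]) auto
    finally show "(\<Sum>e\<in>E'. w e * (L e powr (- b) * dx e) powr p) powr (1/p) \<le> energy L p x powr (1/p)"
      using \<open>1 < p\<close> w_nonneg E'_sub by (intro powr_mono2) (auto intro!: sum_nonneg)
    have "(L e powr b * M e powr b) powr p' = L e * M e" if "e \<in> E'" for e
      using L[OF E'_sub[OF that]] b by (simp add: powr_mult powr_powr M_def)
    then show "(\<Sum>e\<in>E'. w e * (L e powr b * M e powr b) powr p') powr (1/p') \<le> (\<Sum>e\<in>E'. w e * L e * M e) powr b"
      using b by (simp add: mult.assoc)
  qed (use \<open>1 < \<gamma>\<close> in auto)
  finally show ?thesis by (simp add: b_def E'_def M_def mult.assoc)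
qed

lemma sum_edges_mean_le:
  fixes L :: "'e \<Rightarrow> real"
  assumes "0 \<le> R"
    and degree: "\<And>v. v \<in> V \<Longrightarrow>
      (\<Sum>e\<in>{e\<in>E. src e \<noteq> tgt e \<and> (src e = v \<or> tgt e = v)}. w e * L e / 2) \<le> R * m v"
    and h: "\<And>v. 0 \<le> h v" "\<And>v. v \<notin> V \<Longrightarrow> h v = 0"
  shows "(\<Sum>e\<in>{e\<in>E. src e \<noteq> tgt e}. w e * L e * ((h (src e) + h (tgt e)) / 2))
           \<le> R * (\<Sum>v\<in>V. m v * h v)"
proof -
  define E' where "E' = {e\<in>E. src e \<noteq> tgt e}"
  have "(\<Sum>e\<in>E'. w e * L e * ((h (src e) + h (tgt e)) / 2))
      = (\<Sum>e\<in>E'. (w e * L e / 2) * (h (src e) + h (tgt e)))"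
    by (simp add: algebra_simps)
  also have "\<dots> = (\<Sum>v\<in>V. h v * (\<Sum>e\<in>{e\<in>E'. src e = v \<or> tgt e = v}. w e * L e / 2))"
    using finite_E h by (intro sum_endpoints_eq_sum_incident finite_V) (auto simp: E'_def)
  also have "\<dots> \<le> (\<Sum>v\<in>V. h v * (R * m v))"
  proof (intro sum_mono mult_left_mono)
    fix v assume "v \<in> V"
    have "{e\<in>E'. src e = v \<or> tgt e = v} = {e\<in>E. src e \<noteq> tgt e \<and> (src e = v \<or> tgt e = v)}"
      by (auto simp: E'_def)
    then show "(\<Sum>e\<in>{e\<in>E'. src e = v \<or> tgt e = v}. w e * L e / 2) \<le> R * m v"
      using degree[OF \<open>v \<in> V\<close>] by simp
  qed (use h in auto)
  also have "\<dots> = R * (\<Sum>v\<in>V. m v * h v)"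
    by (simp add: sum_distrib_left algebra_simps)
  finally show ?thesis by (simp add: E'_def)
qed

text \<open>Apply \<open>sobolev_L1\<close> to \<open>\<bar>x\<bar> powr \<gamma>\<close>, where \<open>\<gamma> (\<nu> / (\<nu> - 1))\<close> is the Sobolev exponent \<open>q\<close>;
  Holder splits the variation into the \<open>p\<close>-energy and a \<open>q\<close>-norm weighted by vertex degrees.\<close>

lemma sobolev_Lp:
  fixes L :: "'e \<Rightarrow> real"
  assumes iso: "isoperimetric K \<nu>" and "0 < K" "1 < p" "p < \<nu>"
    and L: "\<And>e. e \<in> E \<Longrightarrow> 0 < L e" and supp: "\<And>v. x v \<noteq> 0 \<Longrightarrow> v \<in> V"
    and "0 \<le> R"
    and degree: "\<And>v. v \<in> V \<Longrightarrow>
      (\<Sum>e\<in>{e\<in>E. src e \<noteq> tgt e \<and> (src e = v \<or> tgt e = v)}. w e * L e / 2) \<le> R * m v"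
  shows "K * lp_norm (p * \<nu> / (\<nu> - p)) x
           \<le> p * (\<nu> - 1) / (\<nu> - p) * R powr ((p - 1) / p) * energy L p x powr (1 / p)"
proof -
  define q where "q = p * \<nu> / (\<nu> - p)"
  define \<gamma> where "\<gamma> = p * (\<nu> - 1) / (\<nu> - p)"
  define b where "b = (p - 1) / p"
  define Q where "Q = (\<Sum>v\<in>V. m v * \<bar>x v\<bar> powr q)"
  define D where "D = energy L p x"
  have "1 < \<nu>" "\<nu> - p \<noteq> 0" using \<open>1 < p\<close> \<open>p < \<nu>\<close> by auto
  have "1 * \<nu> \<le> p * \<nu>" using \<open>1 < p\<close> \<open>p < \<nu>\<close> by (intro mult_right_mono) auto
  then have "\<nu> - p \<le> p * \<nu>" using \<open>1 < p\<close> by linarith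
  then have "1 \<le> q" using \<open>1 < p\<close> \<open>p < \<nu>\<close> by (simp add: q_def le_divide_eq)
  have "1 < \<gamma>" using \<open>1 < p\<close> \<open>p < \<nu>\<close> by (simp add: \<gamma>_def field_simps)
  have exps: "(\<gamma> - 1) / q = b" "\<gamma> * \<nu> / (\<nu> - 1) = q" "(\<nu> - 1) / \<nu> = 1 / q + b"
    using \<open>1 < p\<close> \<open>1 < \<nu>\<close> \<open>\<nu> - p \<noteq> 0\<close>
    by (simp_all add: \<gamma>_def q_def b_def divide_simps) (simp_all add: algebra_simps)
  have "0 < b" using \<open>1 < p\<close> by (simp add: b_def)
  have "0 \<le> Q" by (auto simp: Q_def intro!: sum_nonneg mult_nonneg_nonneg m_nonneg)
  have "K * Q powr (1/q + b) = K * lp_norm (\<nu> / (\<nu> - 1)) (\<lambda>v. \<bar>x v\<bar> powr \<gamma>)"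
    by (simp add: lp_norm_def Q_def powr_powr exps mult.commute)
  also have "\<dots> \<le> variation (\<lambda>v. \<bar>x v\<bar> powr \<gamma>)"
    using supp by (intro sobolev_L1[OF iso \<open>0 < K\<close> \<open>1 < \<nu>\<close>]) auto
  also have "\<dots> \<le> \<gamma> * D powr (1/p) *
        (\<Sum>e\<in>{e\<in>E. src e \<noteq> tgt e}.
           w e * L e * ((\<bar>x (src e)\<bar> powr q + \<bar>x (tgt e)\<bar> powr q) / 2)) powr b"
    unfolding D_def b_def
    by (rule variation_abs_powr_le[OF \<open>1 < \<gamma>\<close> \<open>1 \<le> q\<close> \<open>1 < p\<close> _ L]) (use exps in \<open>simp_all add: b_def\<close>)
  also have "\<dots> \<le> \<gamma> * D powr (1/p) * (R * Q) powr b"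
    using \<open>1 < \<gamma>\<close> \<open>0 < b\<close> supp
      sum_edges_mean_le[OF \<open>0 \<le> R\<close> degree, of "\<lambda>v. \<bar>x v\<bar> powr q"]
    by (intro mult_left_mono powr_mono2)
       (auto simp: Q_def intro!: sum_nonneg mult_nonneg_nonneg w_nonneg less_imp_le[OF L])
  finally have *: "K * Q powr (1/q) * Q powr b \<le> \<gamma> * R powr b * D powr (1/p) * Q powr b"
    using \<open>0 \<le> R\<close> \<open>0 \<le> Q\<close> by (simp add: powr_add powr_mult algebra_simps)
  have "K * Q powr (1/q) \<le> \<gamma> * R powr b * D powr (1/p)"
  proof (cases "Q = 0")
    case True
    then show ?thesis using \<open>1 < \<gamma>\<close> energy_nonneg by (simp add: D_def)
  next
    case False
    then show ?thesis using * \<open>0 \<le> Q\<close> by (simp add: mult_le_cancel_right)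
  qed
  then show ?thesis by (simp add: lp_norm_def Q_def q_def \<gamma>_def b_def D_def)
qed

end

section \<open>Star domains and the isoperimetric constants\<close>

lemma mem_pts_Vx [simp]: "Vx v \<in> pts G \<longleftrightarrow> v \<in> verts G"
  by (auto simp: pts_def)

lemma mem_pts_Ed [simp]: "Ed e t \<in> pts G \<longleftrightarrow> e \<in> edges G \<and> 0 < t \<and> t < len G e"
  by (auto simp: pts_def)

definition cut_edges :: "('v, 'e) mgraph \<Rightarrow> 'v set \<Rightarrow> 'e set" where
  "cut_edges G S = {e \<in> edges G. (fst (ends G e) \<in> S) \<noteq> (snd (ends G e) \<in> S)}"

text \<open>The domain realising a vertex set \<open>S\<close>: its area is the weight of the cut edges of \<open>S\<close>
  and its volume is the mass of \<open>S\<close>.\<close>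

definition star_domain :: "('v, 'e) mgraph \<Rightarrow> 'v set \<Rightarrow> ('v, 'e) gpoint set" where
  "star_domain G S = Vx ` S \<union> {Ed e t | e t. e \<in> edges G \<and> 0 < t \<and> t < len G e \<and>
     (fst (ends G e) \<in> S \<and> snd (ends G e) \<in> S
      \<or> fst (ends G e) \<in> S \<and> t < len G e / 2 \<or> snd (ends G e) \<in> S \<and> len G e / 2 < t)}"

definition cut_midpoints :: "('v, 'e) mgraph \<Rightarrow> 'v set \<Rightarrow> ('v, 'e) gpoint set" where
  "cut_midpoints G S = (\<lambda>e. Ed e (len G e / 2)) ` cut_edges G S"

lemma mem_star_domain_Vx [simp]: "Vx v \<in> star_domain G S \<longleftrightarrow> v \<in> S"
  by (auto simp: star_domain_def)

lemma mem_cut_midpoints_Vx [simp]: "Vx v \<notin> cut_midpoints G S"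
  by (auto simp: cut_midpoints_def)

lemma mem_star_domain_Ed [simp]:
  "Ed e t \<in> star_domain G S \<longleftrightarrow> e \<in> edges G \<and> 0 < t \<and> t < len G e \<and>
     (fst (ends G e) \<in> S \<and> snd (ends G e) \<in> S
      \<or> fst (ends G e) \<in> S \<and> t < len G e / 2 \<or> snd (ends G e) \<in> S \<and> len G e / 2 < t)"
  by (auto simp: star_domain_def)

lemma mem_cut_midpoints_Ed [simp]:
  "Ed e t \<in> cut_midpoints G S \<longleftrightarrow> e \<in> cut_edges G S \<and> t = len G e / 2"
  by (auto simp: cut_midpoints_def)

lemma star_domain_subset_pts: "S \<subseteq> verts G \<Longrightarrow> star_domain G S \<subseteq> pts G"
  by (auto simp: star_domain_def)

lemma param_preimage_star_domain:
  assumes "is_graph G" "e \<in> edges G"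
  shows "{0..len G e} \<inter> param G e -` star_domain G S = {0..len G e} \<inter>
     (if fst (ends G e) \<in> S \<and> snd (ends G e) \<in> S then UNIV
      else if fst (ends G e) \<in> S then {..<len G e / 2}
      else if snd (ends G e) \<in> S then {len G e / 2<..} else {})"
  using assms by (auto simp: is_graph_def param_def star_domain_def split: if_splits)

lemma gopen_star_domain:
  assumes "is_graph G" "S \<subseteq> verts G"
  shows "gopen G (star_domain G S)"
  unfolding gopen_def
proof (intro conjI ballI)
  show "star_domain G S \<subseteq> pts G" using assms(2) by (rule star_domain_subset_pts)
  fix e assume "e \<in> edges G"
  show "openin (top_of_set {0..len G e}) ({0..len G e} \<inter> param G e -` star_domain G S)"
    unfolding param_preimage_star_domain[OF assms(1) \<open>e \<in> edges G\<close>]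
    by (auto intro!: openin_open_Int)
qed

lemma gopen_Ed_nhd:
  assumes "gopen G U" "e \<in> edges G" "Ed e t \<in> U" "0 < t" "t < len G e"
  obtains \<epsilon> where "0 < \<epsilon>" "\<And>s. 0 < s \<Longrightarrow> s < len G e \<Longrightarrow> \<bar>s - t\<bar> < \<epsilon> \<Longrightarrow> Ed e s \<in> U"
proof -
  have "openin (top_of_set {0..len G e}) ({0..len G e} \<inter> param G e -` U)"
    using assms(1,2) by (auto simp: gopen_def)
  moreover have "t \<in> {0..len G e} \<inter> param G e -` U"
    using assms(3-5) by (auto simp: param_def)
  ultimately obtain \<epsilon> where "0 < \<epsilon>"
    and \<epsilon>: "\<And>s. s \<in> {0..len G e} \<Longrightarrow> dist s t < \<epsilon> \<Longrightarrow> s \<in> param G e -` U"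
    unfolding openin_euclidean_subtopology_iff by blast
  show ?thesis
  proof (rule that[OF \<open>0 < \<epsilon>\<close>])
    fix s assume "0 < s" "s < len G e" "\<bar>s - t\<bar> < \<epsilon>"
    then show "Ed e s \<in> U" using \<epsilon>[of s] by (auto simp: param_def dist_real_def)
  qed
qed

lemma gclosure_star_domain:
  assumes G: "is_graph G" and S: "S \<subseteq> verts G"
  shows "gclosure G (star_domain G S) = star_domain G S \<union> cut_midpoints G S"
proof
  show "gclosure G (star_domain G S) \<subseteq> star_domain G S \<union> cut_midpoints G S"
  proof
    fix x assume x: "x \<in> gclosure G (star_domain G S)"
    define U where "U = pts G - star_domain G S - cut_midpoints G S"
    have "gopen G U"
      unfolding gopen_def
    proof (intro conjI ballI)
      show "U \<subseteq> pts G" by (auto simp: U_def)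
      fix e assume "e \<in> edges G"
      have "openin (top_of_set {0..len G e}) ({0..len G e} \<inter>
         (if fst (ends G e) \<in> S \<and> snd (ends G e) \<in> S then {}
          else if fst (ends G e) \<in> S then {len G e / 2<..}
          else if snd (ends G e) \<in> S then {..<len G e / 2} else UNIV))"
        by (auto intro!: openin_open_Int)
      also have "{0..len G e} \<inter>
         (if fst (ends G e) \<in> S \<and> snd (ends G e) \<in> S then {}
          else if fst (ends G e) \<in> S then {len G e / 2<..}
          else if snd (ends G e) \<in> S then {..<len G e / 2} else UNIV)
        = {0..len G e} \<inter> param G e -` U"
        using G \<open>e \<in> edges G\<close>
        by (auto simp: is_graph_def U_def param_def cut_edges_def split: if_splits)
      finally show "openin (top_of_set {0..len G e}) ({0..len G e} \<inter> param G e -` U)" .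
    qed
    then show "x \<in> star_domain G S \<union> cut_midpoints G S"
      using x by (auto simp: gclosure_def U_def)
  qed
next
  show "star_domain G S \<union> cut_midpoints G S \<subseteq> gclosure G (star_domain G S)"
  proof
    fix x assume x: "x \<in> star_domain G S \<union> cut_midpoints G S"
    show "x \<in> gclosure G (star_domain G S)"
    proof (cases "x \<in> star_domain G S")
      case True
      then show ?thesis using star_domain_subset_pts[OF S] by (auto simp: gclosure_def)
    next
      case False
      then obtain e where e: "e \<in> cut_edges G S" and x_eq: "x = Ed e (len G e / 2)"
        using x by (auto simp: cut_midpoints_def)
      have "e \<in> edges G" "0 < len G e" using e G by (auto simp: cut_edges_def is_graph_def)
      have "U \<inter> star_domain G S \<noteq> {}" if U: "gopen G U" "x \<in> U" for U
      proof -
        obtain \<epsilon> where "0 < \<epsilon>" and \<epsilon>: "\<And>s. 0 < s \<Longrightarrow> s < len G e \<Longrightarrow> \<bar>s - len G e / 2\<bar> < \<epsilon> \<Longrightarrow> Ed e s \<in> U"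
          by (rule gopen_Ed_nhd[OF U(1) \<open>e \<in> edges G\<close>, of "len G e / 2"])
             (use U(2) x_eq \<open>0 < len G e\<close> in auto)
        define d where "d = min \<epsilon> (len G e / 2) / 2"
        have d: "0 < d" "d < \<epsilon>" "d < len G e / 2" using \<open>0 < \<epsilon>\<close> \<open>0 < len G e\<close> by (auto simp: d_def)
        consider "fst (ends G e) \<in> S" | "snd (ends G e) \<in> S"
          using e by (auto simp: cut_edges_def)
        then show ?thesis
        proof cases
          case 1
          then have "Ed e (len G e / 2 - d) \<in> U \<inter> star_domain G S"
            using d \<epsilon> \<open>e \<in> edges G\<close> by (auto simp: star_domain_def)
          then show ?thesis by blast
        next
          case 2
          then have "Ed e (len G e / 2 + d) \<in> U \<inter> star_domain G S"
            using d \<epsilon> \<open>e \<in> edges G\<close> by (auto simp: star_domain_def)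
          then show ?thesis by blast
        qed
      qed
      then show ?thesis using x_eq \<open>e \<in> edges G\<close> \<open>0 < len G e\<close> by (auto simp: gclosure_def)
    qed
  qed
qed

lemma gfrontier_star_domain:
  assumes "is_graph G" "S \<subseteq> verts G"
  shows "gfrontier G (star_domain G S) = cut_midpoints G S"
proof -
  have "ginterior G (star_domain G S) = star_domain G S"
    using gopen_star_domain[OF assms] by (auto simp: ginterior_def)
  moreover have "cut_midpoints G S \<inter> star_domain G S = {}"
    by (auto simp: cut_midpoints_def cut_edges_def star_domain_def)
  ultimately show ?thesis
    using gclosure_star_domain[OF assms] by (auto simp: gfrontier_def)
qed

lemma area_star_domain:
  assumes "is_graph G" "S \<subseteq> verts G"
  shows "area G (star_domain G S) = ennreal (\<Sum>e\<in>cut_edges G S. wt G e)"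
proof -
  have "inj_on (\<lambda>e. Ed e (len G e / 2)) (cut_edges G S)" by (auto simp: inj_on_def)
  then have "area G (star_domain G S) = (\<Sum>e\<in>cut_edges G S. ennreal (wt G e))"
    unfolding area_def gfrontier_star_domain[OF assms] cut_midpoints_def
    by (subst sum.reindex) (auto simp: bweight_def)
  also have "\<dots> = ennreal (\<Sum>e\<in>cut_edges G S. wt G e)"
    using assms(1) by (intro sum_ennreal) (auto simp: is_graph_def cut_edges_def less_imp_le)
  finally show ?thesis .
qed

lemma vol_eq_sum:
  assumes "is_graph G" "finite S" "{v \<in> verts G. Vx v \<in> A} = S"
  shows "vol G A = ennreal (\<Sum>v\<in>S. vmeas G v)"
  using assms by (auto simp: vol_def is_graph_def less_imp_le intro: sum_ennreal)

lemma sum_vmeas_le_vol: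
  assumes "is_graph G" "finite S" "S \<subseteq> verts G" "Vx ` S \<subseteq> A"
  shows "ennreal (\<Sum>v\<in>S. vmeas G v) \<le> vol G A"
proof -
  have "ennreal (\<Sum>v\<in>S. vmeas G v) = infsum (\<lambda>v. ennreal (vmeas G v)) S"
    using assms by (subst sum_ennreal[symmetric]) (auto simp: is_graph_def less_imp_le)
  also have "\<dots> \<le> vol G A"
    unfolding vol_def
    by (rule infsum_mono_neutral) (use assms in \<open>auto intro: nonneg_summable_on_complete\<close>)
  finally show ?thesis .
qed

lemma admissible_star_domain:
  assumes "is_graph G" "S \<subseteq> verts G" "S \<inter> bdry G = {}" "finite (cut_edges G S)"
  shows "admissible G (star_domain G S)"
  using assms gopen_star_domain[OF assms(1,2)] gfrontier_star_domain[OF assms(1,2)]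
  by (auto simp: admissible_def cut_midpoints_def)

lemma epow_ennreal: "0 < M \<Longrightarrow> epow (ennreal M) r = ennreal (M powr r)"
  by (simp add: epow_def)

definition cut_ratio :: "('v, 'e) mgraph \<Rightarrow> real \<Rightarrow> 'v set \<Rightarrow> real" where
  "cut_ratio G \<nu> S = (\<Sum>e\<in>cut_edges G S. wt G e) / (\<Sum>v\<in>S. vmeas G v) powr (1 - 1 / \<nu>)"

lemma area_div_epow_star_domain:
  assumes "is_graph G" "S \<subseteq> verts G" "finite S" "S \<noteq> {}"
  shows "area G (star_domain G S) / epow (vol G (star_domain G S)) (1 - 1 / \<nu>)
           = ennreal (cut_ratio G \<nu> S)"
proof -
  have "0 < (\<Sum>v\<in>S. vmeas G v)"
    using assms by (intro sum_pos) (auto simp: is_graph_def)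
  moreover have "0 \<le> (\<Sum>e\<in>cut_edges G S. wt G e)"
    using assms(1) by (intro sum_nonneg) (auto simp: is_graph_def cut_edges_def less_imp_le)
  moreover have "vol G (star_domain G S) = ennreal (\<Sum>v\<in>S. vmeas G v)"
    using assms by (intro vol_eq_sum) auto
  ultimately show ?thesis
    using assms by (simp add: area_star_domain epow_ennreal divide_ennreal cut_ratio_def)
qed

lemma Iso_le_cut_ratio:
  assumes "is_graph G" "S \<subseteq> verts G" "finite S" "S \<noteq> {}" "S \<inter> bdry G = {}"
    and "finite (cut_edges G S)"
  shows "Iso G \<nu> \<le> ennreal (cut_ratio G \<nu> S)"
proof -
  have "star_domain G S \<noteq> {}"
    using \<open>S \<noteq> {}\<close> by (metis ex_in_conv mem_star_domain_Vx)
  moreover have "admissible G (star_domain G S)"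
    using assms by (intro admissible_star_domain)
  ultimately have "Iso G \<nu> \<le> area G (star_domain G S) / epow (vol G (star_domain G S)) (1 - 1 / \<nu>)"
    unfolding Iso_def by (intro INF_lower) auto
  then show ?thesis using area_div_epow_star_domain[OF assms(1-4)] by simp
qed

lemma Iso_tilde_le_cut_ratio:
  assumes G: "is_graph G" and "closed_graph G" "S \<subseteq> verts G" "S \<noteq> {}"
    and half: "ennreal (\<Sum>v\<in>S. vmeas G v) \<le> vol G (pts G) / 2"
  shows "Iso_tilde G \<nu> \<le> ennreal (cut_ratio G \<nu> S)"
proof -
  have "finite (verts G)" "finite (edges G)" "bdry G = {}"
    using \<open>closed_graph G\<close> by (auto simp: closed_graph_def)
  then have "finite S" "finite (cut_edges G S)"
    using \<open>S \<subseteq> verts G\<close> finite_subset by (auto simp: cut_edges_def)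
  define M where "M = (\<Sum>v\<in>S. vmeas G v)"
  define M' where "M' = (\<Sum>v\<in>verts G - S. vmeas G v)"
  have "0 < M" unfolding M_def
    using assms \<open>finite S\<close> by (intro sum_pos) (auto simp: is_graph_def)
  have vol_S: "vol G (star_domain G S) = ennreal M"
    using G \<open>finite S\<close> \<open>S \<subseteq> verts G\<close> by (auto simp: M_def intro: vol_eq_sum)
  have vol_compl: "vol G (pts G - star_domain G S) = ennreal M'"
    using G \<open>finite (verts G)\<close> by (auto simp: M'_def intro: vol_eq_sum)
  have "vol G (pts G) = ennreal (\<Sum>v\<in>verts G. vmeas G v)"
    using G \<open>finite (verts G)\<close> by (intro vol_eq_sum) auto
  also have "(\<Sum>v\<in>verts G. vmeas G v) = M + M'"
    using sum.subset_diff[OF \<open>S \<subseteq> verts G\<close> \<open>finite (verts G)\<close>, of "vmeas G"]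
    by (simp add: M_def M'_def)
  finally have vol_pts: "vol G (pts G) = ennreal (M + M')" .
  have "0 \<le> M'"
    using G by (auto simp: M'_def is_graph_def less_imp_le intro: sum_nonneg)
  from half have "ennreal M \<le> vol G (pts G) / 2" by (simp only: M_def)
  also have "\<dots> = ennreal ((M + M') / 2)"
    unfolding vol_pts using \<open>0 < M\<close> \<open>0 \<le> M'\<close> by (intro ennreal_divide_numeral) simp
  finally have "M \<le> M'"
    using \<open>0 < M\<close> \<open>0 \<le> M'\<close> ennreal_le_iff[of "(M + M') / 2" M] by simp
  have "star_domain G S \<noteq> pts G"
  proof
    assume "star_domain G S = pts G"
    then have "verts G - S = {}" by (metis Diff_eq_empty_iff mem_pts_Vx mem_star_domain_Vx subsetI)
    then show False using \<open>M \<le> M'\<close> \<open>0 < M\<close> by (simp only: M'_def sum.empty)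
  qed
  moreover have "star_domain G S \<noteq> {}"
    using \<open>S \<noteq> {}\<close> by (metis ex_in_conv mem_star_domain_Vx)
  moreover have "admissible G (star_domain G S)"
    using assms \<open>finite (cut_edges G S)\<close> \<open>bdry G = {}\<close> by (intro admissible_star_domain) auto
  ultimately have "Iso_tilde G \<nu> \<le> area G (star_domain G S) /
      epow (min (vol G (star_domain G S)) (vol G (pts G - star_domain G S))) (1 - 1 / \<nu>)"
    unfolding Iso_tilde_def by (intro INF_lower) auto
  also have "min (vol G (star_domain G S)) (vol G (pts G - star_domain G S)) = vol G (star_domain G S)"
    using \<open>M \<le> M'\<close> by (simp add: vol_S vol_compl min_absorb1 ennreal_leI)
  finally show ?thesis
    using area_div_epow_star_domain[OF G \<open>S \<subseteq> verts G\<close> \<open>finite S\<close> \<open>S \<noteq> {}\<close>] by simp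
qed

section \<open>The Sobolev inequality on metric graphs\<close>

definition vertex_values :: "('v, 'e) mgraph \<Rightarrow> (('v, 'e) gpoint \<Rightarrow> real) \<Rightarrow> 'v \<Rightarrow> real" where
  "vertex_values G \<phi> v = (if v \<in> verts G then \<phi> (Vx v) else 0)"

definition edge_energy :: "('v, 'e) mgraph \<Rightarrow> 'e set \<Rightarrow> real \<Rightarrow> ('v \<Rightarrow> real) \<Rightarrow> real" where
  "edge_energy G F p y = (\<Sum>e\<in>F. wt G e *
     (len G e powr (1 - p) * \<bar>y (snd (ends G e)) - y (fst (ends G e))\<bar> powr p))"

lemma vertex_values_nonzero: "vertex_values G \<phi> v \<noteq> 0 \<Longrightarrow> v \<in> vsupp G \<phi>"
  by (auto simp: vertex_values_def vsupp_def split: if_splits)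

lemma vnorm_eq_vertex_values:
  "vnorm G q \<phi> = (\<Sum>v\<in>vsupp G \<phi>. vmeas G v * \<bar>vertex_values G \<phi> v\<bar> powr q) powr (1 / q)"
  unfolding vnorm_def by (intro arg_cong2[where f = "(powr)"] sum.cong) (auto simp: vsupp_def vertex_values_def)

lemma edge_fun_endpoints:
  assumes "is_graph G" "e \<in> edges G"
  shows "edge_fun G \<phi> e 0 = vertex_values G \<phi> (fst (ends G e))"
    and "edge_fun G \<phi> e (len G e) = vertex_values G \<phi> (snd (ends G e))"
  using assms by (auto simp: edge_fun_def param_def vertex_values_def is_graph_def)

lemma vertex_values_endpoints_outside_esupp:
  assumes G: "is_graph G" and "C1_Dir G \<phi>" "e \<in> edges G" "e \<notin> esupp G \<phi>"
  shows "vertex_values G \<phi> (fst (ends G e)) = 0" "vertex_values G \<phi> (snd (ends G e)) = 0"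
proof -
  have "0 < len G e" using G \<open>e \<in> edges G\<close> by (auto simp: is_graph_def)
  have "continuous_on {0..len G e} (edge_fun G \<phi> e)"
    using assms by (auto simp: C1_Dir_def)
  moreover have "edge_fun G \<phi> e t = 0" if "t \<in> {0<..<len G e}" for t
    using that assms by (auto simp: edge_fun_def param_def esupp_def)
  moreover have "closure {0<..<len G e} = {0..len G e}" using \<open>0 < len G e\<close> by simp
  ultimately have "edge_fun G \<phi> e t = 0" if "t \<in> {0..len G e}" for t
    using continuous_constant_on_closure[of "{0<..<len G e}" "edge_fun G \<phi> e" 0 t] that by auto
  then have "edge_fun G \<phi> e 0 = 0" "edge_fun G \<phi> e (len G e) = 0"
    using \<open>0 < len G e\<close> by auto
  then show "vertex_values G \<phi> (fst (ends G e)) = 0" "vertex_values G \<phi> (snd (ends G e)) = 0"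
    by (simp_all add: edge_fun_endpoints[OF G \<open>e \<in> edges G\<close>])
qed

lemma cut_edges_subset_esupp:
  assumes "is_graph G" "C1_Dir G \<phi>" "S \<subseteq> vsupp G \<phi>"
  shows "cut_edges G S \<subseteq> esupp G \<phi>"
proof
  fix e assume e: "e \<in> cut_edges G S"
  then have "vertex_values G \<phi> (fst (ends G e)) \<noteq> 0 \<or> vertex_values G \<phi> (snd (ends G e)) \<noteq> 0"
    using assms(3) by (auto simp: cut_edges_def vsupp_def vertex_values_def)
  then show "e \<in> esupp G \<phi>"
    using e vertex_values_endpoints_outside_esupp[OF assms(1,2)] by (auto simp: cut_edges_def)
qed

lemma edge_energy_le_grad_norm:
  assumes G: "is_graph G" and C: "C1_Dir G \<phi>" and "1 \<le> p"
  shows "edge_energy G (esupp G \<phi>) p (vertex_values G \<phi>) powr (1 / p) \<le> grad_norm G p \<phi>"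
  unfolding grad_norm_def edge_energy_def
proof (intro powr_mono2 sum_mono sum_nonneg mult_left_mono mult_nonneg_nonneg)
  fix e assume "e \<in> esupp G \<phi>"
  then have "e \<in> edges G" by (simp add: esupp_def)
  then have "0 < len G e" "0 < wt G e" using G by (auto simp: is_graph_def)
  obtain f' where "\<forall>t\<in>{0<..<len G e}. (edge_fun G \<phi> e has_real_derivative f' t) (at t)"
      "uniformly_continuous_on {0<..<len G e} f'"
    using C \<open>e \<in> edges G\<close> unfolding C1_Dir_def by blast
  then have "len G e powr (1 - p) * \<bar>edge_fun G \<phi> e (len G e) - edge_fun G \<phi> e 0\<bar> powr p
      \<le> integral {0..len G e} (\<lambda>t. \<bar>deriv (edge_fun G \<phi> e) t\<bar> powr p)"
    using C \<open>e \<in> edges G\<close> \<open>0 < len G e\<close> \<open>1 \<le> p\<close>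
    by (intro increment_powr_le_integral_deriv) (auto simp: C1_Dir_def)
  then show "len G e powr (1 - p) *
      \<bar>vertex_values G \<phi> (snd (ends G e)) - vertex_values G \<phi> (fst (ends G e))\<bar> powr p
      \<le> integral {0..len G e} (\<lambda>t. \<bar>deriv (edge_fun G \<phi> e) t\<bar> powr p)"
    by (simp add: edge_fun_endpoints[OF G \<open>e \<in> edges G\<close>])
  show "0 \<le> wt G e" using \<open>0 < wt G e\<close> by simp
qed (use \<open>1 \<le> p\<close> G in \<open>auto simp: esupp_def is_graph_def less_imp_le\<close>)

lemma incident_weight_le_rho_sup:
  assumes G: "is_graph G" and "v \<in> verts G" "finite F" "F \<subseteq> edges G" "rho_sup G < top"
  shows "(\<Sum>e\<in>{e\<in>F. fst (ends G e) \<noteq> snd (ends G e) \<and> (fst (ends G e) = v \<or> snd (ends G e) = v)}.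
            wt G e * len G e / 2) \<le> enn2real (rho_sup G) * vmeas G v"
proof -
  define A where "A = {e\<in>F. fst (ends G e) \<noteq> snd (ends G e) \<and> (fst (ends G e) = v \<or> snd (ends G e) = v)}"
  define B where "B = {e \<in> edges G. v = fst (ends G e) \<or> v = snd (ends G e)}"
  define f where "f = (\<lambda>e. ennreal (wt G e * len G e / 2))"
  have "A \<subseteq> B" "finite A" using assms by (auto simp: A_def B_def)
  have "0 < vmeas G v" using G \<open>v \<in> verts G\<close> by (auto simp: is_graph_def)
  have nonneg: "0 \<le> wt G e * len G e / 2" if "e \<in> A" for e
    using G \<open>A \<subseteq> B\<close> that by (auto simp: is_graph_def B_def less_imp_le)
  have "ennreal (\<Sum>e\<in>A. wt G e * len G e / 2) = infsum f A"
    using nonneg \<open>finite A\<close> by (simp add: f_def sum_ennreal)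
  also have "\<dots> \<le> infsum f B"
    by (rule infsum_mono_neutral) (use \<open>A \<subseteq> B\<close> in \<open>auto simp: f_def intro: nonneg_summable_on_complete\<close>)
  finally have "ennreal (\<Sum>e\<in>A. wt G e * len G e / 2) / ennreal (vmeas G v) \<le> infsum f B / ennreal (vmeas G v)"
    by (rule divide_right_mono_ennreal)
  also have "\<dots> \<le> rho_sup G"
    unfolding rho_sup_def B_def f_def by (rule SUP_upper2[OF \<open>v \<in> verts G\<close>]) (simp add: eq_commute)
  finally have "ennreal ((\<Sum>e\<in>A. wt G e * len G e / 2) / vmeas G v) \<le> ennreal (enn2real (rho_sup G))"
    using \<open>0 < vmeas G v\<close> nonneg \<open>rho_sup G < top\<close>
    by (simp add: divide_ennreal sum_nonneg ennreal_enn2real less_top)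
  then have "(\<Sum>e\<in>A. wt G e * len G e / 2) / vmeas G v \<le> enn2real (rho_sup G)"
    by (simp add: ennreal_le_iff2) (use enn2real_nonneg[of "rho_sup G"] in linarith)
  then show ?thesis using \<open>0 < vmeas G v\<close> by (simp add: A_def divide_le_eq)
qed

text \<open>The real number \<open>\<rho>\<^sub>s\<^sub>u\<^sub>p powr ((p - 1) / p)\<close>; it is the junk value \<open>0\<close> when \<open>p > 1\<close> and
  \<open>\<rho>\<^sub>s\<^sub>u\<^sub>p = \<infinity>\<close>.\<close>

definition rho_factor :: "('v, 'e) mgraph \<Rightarrow> real \<Rightarrow> real" where
  "rho_factor G p = enn2real (epow (rho_sup G) ((p - 1) / p))"

lemma rho_factor_1 [simp]: "rho_factor G 1 = 1"
  by (simp add: rho_factor_def epow_def)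

lemma rho_factor_eq: "rho_sup G < top \<Longrightarrow> 1 < p \<Longrightarrow> rho_factor G p = enn2real (rho_sup G) powr ((p - 1) / p)"
  by (simp add: rho_factor_def epow_def)

lemma epow_rho_sup_eq:
  "p = 1 \<or> rho_sup G < top \<Longrightarrow> epow (rho_sup G) ((p - 1) / p) = ennreal (rho_factor G p)"
  by (auto simp: rho_factor_def epow_def)

lemma sum_wt_indicator_diff_eq_cut:
  assumes "cut_edges G S \<subseteq> F" "F \<subseteq> edges G" "finite F"
  shows "(\<Sum>e\<in>F. wt G e * \<bar>indicator S (snd (ends G e)) - indicator S (fst (ends G e))\<bar>)
           = (\<Sum>e\<in>cut_edges G S. wt G e)"
proof -
  have "(\<Sum>e\<in>F. wt G e * \<bar>indicator S (snd (ends G e)) - indicator S (fst (ends G e))\<bar>)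
      = (\<Sum>e\<in>F. if e \<in> cut_edges G S then wt G e else 0)"
    using assms(2) by (intro sum.cong) (auto simp: cut_edges_def indicator_def)
  also have "\<dots> = (\<Sum>e\<in>cut_edges G S. wt G e)"
    using assms by (simp add: sum.inter_restrict[symmetric] Int_absorb1)
  finally show ?thesis .
qed

lemma sobolev_on_vertex_set:
  assumes G: "is_graph G" and C: "C1_Dir G \<phi>" and "1 \<le> p" "p < \<nu>" "0 < K"
    and V': "V' \<subseteq> vsupp G \<phi>" and supp: "\<And>v. y v \<noteq> 0 \<Longrightarrow> v \<in> V'"
    and ratio: "\<And>S. S \<subseteq> V' \<Longrightarrow> S \<noteq> {} \<Longrightarrow> K \<le> cut_ratio G \<nu> S"
    and rho: "1 < p \<Longrightarrow> rho_sup G < top"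
  shows "K * (\<Sum>v\<in>V'. vmeas G v * \<bar>y v\<bar> powr (p * \<nu> / (\<nu> - p))) powr (1 / (p * \<nu> / (\<nu> - p)))
           \<le> p * (\<nu> - 1) / (\<nu> - p) * rho_factor G p * edge_energy G (esupp G \<phi>) p y powr (1 / p)"
proof -
  have fin: "finite (vsupp G \<phi>)" "finite (esupp G \<phi>)" using C by (auto simp: C1_Dir_def)
  have "V' \<subseteq> verts G" using V' by (auto simp: vsupp_def)
  have "esupp G \<phi> \<subseteq> edges G" by (auto simp: esupp_def)
  interpret N: finite_network V' "esupp G \<phi>" "\<lambda>e. fst (ends G e)" "\<lambda>e. snd (ends G e)" "vmeas G" "wt G"
    using G fin V' \<open>V' \<subseteq> verts G\<close> \<open>esupp G \<phi> \<subseteq> edges G\<close>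
    by unfold_locales (auto simp: is_graph_def less_imp_le intro: finite_subset)
  have iso: "N.isoperimetric K \<nu>"
    unfolding N.isoperimetric_def
  proof (intro allI impI)
    fix S assume "S \<subseteq> V'" "S \<noteq> {}"
    then have "finite S" using N.finite_V finite_subset by blast
    then have "0 < (\<Sum>v\<in>S. vmeas G v)"
      using G \<open>S \<subseteq> V'\<close> \<open>S \<noteq> {}\<close> \<open>V' \<subseteq> verts G\<close> by (intro sum_pos) (auto simp: is_graph_def)
    then have "0 < (\<Sum>v\<in>S. vmeas G v) powr (1 - 1 / \<nu>)" by simp
    then have "K * (\<Sum>v\<in>S. vmeas G v) powr (1 - 1 / \<nu>) \<le> (\<Sum>e\<in>cut_edges G S. wt G e)"
      using ratio[OF \<open>S \<subseteq> V'\<close> \<open>S \<noteq> {}\<close>] by (simp add: cut_ratio_def pos_le_divide_eq)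
    also have "\<dots> = N.variation (indicator S)"
      unfolding N.variation_def using \<open>S \<subseteq> V'\<close> V' fin
      by (intro sum_wt_indicator_diff_eq_cut[symmetric] cut_edges_subset_esupp[OF G C]
          \<open>esupp G \<phi> \<subseteq> edges G\<close>) auto
    finally show "K * (\<Sum>v\<in>S. vmeas G v) powr (1 - 1 / \<nu>) \<le> N.variation (indicator S)" .
  qed
  have energy_eq: "N.energy (len G) p y = edge_energy G (esupp G \<phi>) p y"
    by (simp add: N.energy_def edge_energy_def)
  show ?thesis
  proof (cases "p = 1")
    case True
    have "N.energy (len G) 1 y = N.variation y"
      unfolding N.energy_def N.variation_def
    proof (intro sum.cong refl)
      fix e assume "e \<in> esupp G \<phi>"
      then have "0 < len G e" using G \<open>esupp G \<phi> \<subseteq> edges G\<close> by (auto simp: is_graph_def)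
      then show "wt G e * (len G e powr (1 - 1) * \<bar>y (snd (ends G e)) - y (fst (ends G e))\<bar> powr 1)
          = wt G e * \<bar>y (snd (ends G e)) - y (fst (ends G e))\<bar>" by simp
    qed
    then have "edge_energy G (esupp G \<phi>) p y = N.variation y"
      using True energy_eq by simp
    then show ?thesis
      using N.sobolev_L1[OF iso \<open>0 < K\<close>, of y] supp \<open>p < \<nu>\<close> True N.variation_nonneg
      by (simp add: N.lp_norm_def)
  next
    case False
    then have "1 < p" using \<open>1 \<le> p\<close> by simp
    have "K * N.lp_norm (p * \<nu> / (\<nu> - p)) y
        \<le> p * (\<nu> - 1) / (\<nu> - p) * enn2real (rho_sup G) powr ((p - 1) / p) * N.energy (len G) p y powr (1 / p)"
      using G \<open>esupp G \<phi> \<subseteq> edges G\<close> \<open>V' \<subseteq> verts G\<close> fin(2)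
        incident_weight_le_rho_sup[OF G _ fin(2) \<open>esupp G \<phi> \<subseteq> edges G\<close> rho[OF \<open>1 < p\<close>]]
      by (intro N.sobolev_Lp[OF iso \<open>0 < K\<close> \<open>1 < p\<close> \<open>p < \<nu>\<close>]) (auto simp: is_graph_def supp)
    then show ?thesis
      using rho_factor_eq[OF rho \<open>1 < p\<close>] \<open>1 < p\<close> by (simp add: N.lp_norm_def energy_eq)
  qed
qed

lemma edge_energy_pos_part_add_neg_part_le:
  assumes "is_graph G" "F \<subseteq> edges G" "1 \<le> p"
  shows "edge_energy G F p (\<lambda>v. max (y v) 0) + edge_energy G F p (\<lambda>v. max (- y v) 0)
           \<le> edge_energy G F p y"
  unfolding edge_energy_def sum.distrib[symmetric]
proof (intro sum_mono)
  fix e assume "e \<in> F"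
  then have "0 \<le> wt G e" using assms by (auto simp: is_graph_def less_imp_le)
  define a b where "a = y (fst (ends G e))" and "b = y (snd (ends G e))"
  have "\<bar>max b 0 - max a 0\<bar> powr p + \<bar>max (- b) 0 - max (- a) 0\<bar> powr p
      \<le> (\<bar>max b 0 - max a 0\<bar> + \<bar>max (- b) 0 - max (- a) 0\<bar>) powr p"
    using \<open>1 \<le> p\<close> by (intro add_powr_le_powr_add) auto
  also have "\<bar>max b 0 - max a 0\<bar> + \<bar>max (- b) 0 - max (- a) 0\<bar> = \<bar>b - a\<bar>"
    by (auto simp: max_def abs_if)
  finally show "wt G e * (len G e powr (1 - p) * \<bar>max b 0 - max a 0\<bar> powr p) +
      wt G e * (len G e powr (1 - p) * \<bar>max (- b) 0 - max (- a) 0\<bar> powr p)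
      \<le> wt G e * (len G e powr (1 - p) * \<bar>b - a\<bar> powr p)"
    using \<open>0 \<le> wt G e\<close> by (simp add: mult_left_mono flip: distrib_left)
qed

lemma sobolev_Iso:
  assumes G: "is_graph G" and C: "C1_Dir G \<phi>" and p: "1 \<le> p" "p < \<nu>" and "0 < K"
    and K: "ennreal K \<le> Iso G \<nu>" and rho: "1 < p \<Longrightarrow> rho_sup G < top"
  shows "K * vnorm G (p * \<nu> / (\<nu> - p)) \<phi> \<le> p * (\<nu> - 1) / (\<nu> - p) * rho_factor G p * grad_norm G p \<phi>"
proof -
  have "finite (vsupp G \<phi>)" "finite (esupp G \<phi>)" "vsupp G \<phi> \<subseteq> verts G" "vsupp G \<phi> \<inter> bdry G = {}"
    using C by (auto simp: C1_Dir_def vsupp_def)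
  have ratio: "K \<le> cut_ratio G \<nu> S" if "S \<subseteq> vsupp G \<phi>" "S \<noteq> {}" for S
  proof -
    have "finite (cut_edges G S)"
      using cut_edges_subset_esupp[OF G C that(1)] \<open>finite (esupp G \<phi>)\<close> finite_subset by blast
    then have "ennreal K \<le> ennreal (cut_ratio G \<nu> S)"
      using K that \<open>finite (vsupp G \<phi>)\<close> \<open>vsupp G \<phi> \<subseteq> verts G\<close> \<open>vsupp G \<phi> \<inter> bdry G = {}\<close>
        Iso_le_cut_ratio[OF G, of S \<nu>] finite_subset[of S "vsupp G \<phi>"] by fastforce
    then show ?thesis using \<open>0 < K\<close> by (simp add: ennreal_le_iff2)
  qed
  have "K * vnorm G (p * \<nu> / (\<nu> - p)) \<phi>
      \<le> p * (\<nu> - 1) / (\<nu> - p) * rho_factor G p *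
         edge_energy G (esupp G \<phi>) p (vertex_values G \<phi>) powr (1 / p)"
    unfolding vnorm_eq_vertex_values
    by (rule sobolev_on_vertex_set[OF G C p \<open>0 < K\<close> order_refl vertex_values_nonzero ratio rho])
  also have "\<dots> \<le> p * (\<nu> - 1) / (\<nu> - p) * rho_factor G p * grad_norm G p \<phi>"
    using p by (intro mult_left_mono edge_energy_le_grad_norm[OF G C]) (auto simp: rho_factor_def)
  finally show ?thesis .
qed

lemma sobolev_Iso_tilde_on_level_set:
  assumes G: "is_graph G" and C: "C1_Dir G \<phi>" and p: "1 \<le> p" "p < \<nu>" and "0 < K"
    and cl: "closed_graph G" and K: "ennreal K \<le> Iso_tilde G \<nu>" and rho: "1 < p \<Longrightarrow> rho_sup G < top"
    and half: "vol G {z \<in> pts G. P (\<phi> z)} \<le> vol G (pts G) / 2"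
    and supp: "\<And>v. y v \<noteq> 0 \<Longrightarrow> v \<in> vsupp G \<phi> \<and> P (\<phi> (Vx v))"
  shows "K * (\<Sum>v\<in>{v \<in> vsupp G \<phi>. P (\<phi> (Vx v))}. vmeas G v * \<bar>y v\<bar> powr (p * \<nu> / (\<nu> - p)))
             powr (1 / (p * \<nu> / (\<nu> - p)))
           \<le> p * (\<nu> - 1) / (\<nu> - p) * rho_factor G p * edge_energy G (esupp G \<phi>) p y powr (1 / p)"
proof (rule sobolev_on_vertex_set[OF G C p \<open>0 < K\<close> _ _ _ rho])
  show "{v \<in> vsupp G \<phi>. P (\<phi> (Vx v))} \<subseteq> vsupp G \<phi>" by blast
  show "v \<in> {v \<in> vsupp G \<phi>. P (\<phi> (Vx v))}" if "y v \<noteq> 0" for v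
    using supp[OF that] by blast
  fix S assume S: "S \<subseteq> {v \<in> vsupp G \<phi>. P (\<phi> (Vx v))}" "S \<noteq> {}"
  have "finite (vsupp G \<phi>)" using C by (simp add: C1_Dir_def)
  then have "S \<subseteq> verts G" "finite S"
    using S(1) finite_subset[of S "vsupp G \<phi>"] by (auto simp: vsupp_def)
  then have "ennreal (\<Sum>v\<in>S. vmeas G v) \<le> vol G {z \<in> pts G. P (\<phi> z)}"
    using S(1) by (intro sum_vmeas_le_vol[OF G]) auto
  then have "ennreal K \<le> ennreal (cut_ratio G \<nu> S)"
    using K half Iso_tilde_le_cut_ratio[OF G cl \<open>S \<subseteq> verts G\<close> S(2)] by (blast intro: order_trans)
  then show "K \<le> cut_ratio G \<nu> S" using \<open>0 < K\<close> by (simp add: ennreal_le_iff2)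
qed

lemma sobolev_Iso_tilde:
  assumes G: "is_graph G" and C: "C1_Dir G \<phi>" and p: "1 \<le> p" "p < \<nu>" and "0 < K"
    and cl: "closed_graph G" and split: "split_fun G \<phi>"
    and K: "ennreal K \<le> Iso_tilde G \<nu>" and rho: "1 < p \<Longrightarrow> rho_sup G < top"
  shows "K * vnorm G (p * \<nu> / (\<nu> - p)) \<phi> \<le> p * (\<nu> - 1) / (\<nu> - p) * rho_factor G p * grad_norm G p \<phi>"
proof -
  define q where "q = p * \<nu> / (\<nu> - p)"
  define c where "c = p * (\<nu> - 1) / (\<nu> - p) * rho_factor G p"
  define x where "x = vertex_values G \<phi>"
  define x_pos where "x_pos = (\<lambda>v. max (x v) 0)"
  define x_neg where "x_neg = (\<lambda>v. max (- x v) 0)"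
  define V_pos where "V_pos = {v \<in> vsupp G \<phi>. 0 < \<phi> (Vx v)}"
  define V_neg where "V_neg = {v \<in> vsupp G \<phi>. \<phi> (Vx v) < 0}"
  define D where "D = edge_energy G (esupp G \<phi>) p"
  define Q where "Q = (\<lambda>V y. \<Sum>v\<in>V. vmeas G v * \<bar>y v\<bar> powr q)"
  have "finite (vsupp G \<phi>)" using C by (simp add: C1_Dir_def)
  have "0 \<le> c" using p by (simp add: c_def rho_factor_def)
  have "p \<le> q" using p by (simp add: q_def field_simps)
  have Q_nonneg: "0 \<le> Q V y" if "V \<subseteq> vsupp G \<phi>" for V y
    using that G by (auto simp: Q_def vsupp_def is_graph_def less_imp_le intro!: sum_nonneg)
  have D_nonneg: "0 \<le> D y" for y
    using G by (auto simp: D_def edge_energy_def esupp_def is_graph_def less_imp_le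
        intro!: sum_nonneg mult_nonneg_nonneg)
  have pos: "K * Q V_pos x_pos powr (1/q) \<le> c * D x_pos powr (1/p)"
    unfolding Q_def D_def c_def q_def V_pos_def
    using split vertex_values_nonzero[of G \<phi>]
    by (intro sobolev_Iso_tilde_on_level_set[OF G C p \<open>0 < K\<close> cl K rho])
       (auto simp: split_fun_def x_pos_def x_def vertex_values_def max_def split: if_splits)
  have neg: "K * Q V_neg x_neg powr (1/q) \<le> c * D x_neg powr (1/p)"
    unfolding Q_def D_def c_def q_def V_neg_def
    using split vertex_values_nonzero[of G \<phi>]
    by (intro sobolev_Iso_tilde_on_level_set[OF G C p \<open>0 < K\<close> cl K rho])
       (auto simp: split_fun_def x_neg_def x_def vertex_values_def max_def split: if_splits)
  have "Q (vsupp G \<phi>) x = Q V_pos x + Q V_neg x"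
  proof -
    have "vsupp G \<phi> = V_pos \<union> V_neg" "V_pos \<inter> V_neg = {}"
      by (auto simp: V_pos_def V_neg_def vsupp_def)
    moreover have "finite V_pos" "finite V_neg" using \<open>finite (vsupp G \<phi>)\<close> by (auto simp: V_pos_def V_neg_def)
    ultimately show ?thesis by (simp add: Q_def sum.union_disjoint)
  qed
  also have "\<dots> = Q V_pos x_pos + Q V_neg x_neg"
    unfolding Q_def by (intro arg_cong2[where f = "(+)"] sum.cong)
      (auto simp: V_pos_def V_neg_def x_pos_def x_neg_def x_def vertex_values_def vsupp_def)
  finally have "K * vnorm G q \<phi> = K * (Q V_pos x_pos + Q V_neg x_neg) powr (1/q)"
    by (simp add: vnorm_eq_vertex_values Q_def x_def)
  also have "\<dots> \<le> c * (D x_pos + D x_neg) powr (1/p)"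
    using \<open>0 < K\<close> \<open>0 \<le> c\<close> p(1) \<open>p \<le> q\<close> pos neg Q_nonneg D_nonneg
    by (intro powr_bound_add) (auto simp: V_pos_def V_neg_def)
  also have "\<dots> \<le> c * D x powr (1/p)"
    using edge_energy_pos_part_add_neg_part_le[OF G _ p(1), of "esupp G \<phi>" x] \<open>0 \<le> c\<close> p(1) D_nonneg
    by (intro mult_left_mono powr_mono2 add_nonneg_nonneg) (auto simp: D_def x_pos_def x_neg_def esupp_def)
  also have "\<dots> \<le> c * grad_norm G p \<phi>"
    using edge_energy_le_grad_norm[OF G C p(1)] \<open>0 \<le> c\<close> by (simp add: D_def x_def mult_left_mono)
  finally show ?thesis by (simp add: c_def q_def)
qed

lemma sob_const_mult_le:
  assumes p: "1 \<le> p" "p < \<nu>" and "0 \<le> N" "0 \<le> g"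
    and bound: "\<And>K. 0 < K \<Longrightarrow> ennreal K \<le> I \<Longrightarrow> (1 < p \<Longrightarrow> rho_sup G < top) \<Longrightarrow>
                  K * N \<le> p * (\<nu> - 1) / (\<nu> - p) * rho_factor G p * g"
  shows "sob_const I G \<nu> p * ennreal N \<le> ennreal g"
proof (cases "1 < p \<and> rho_sup G = top")
  case True
  then show ?thesis by (simp add: sob_const_def epow_def)
next
  case False
  then have rho: "1 < p \<Longrightarrow> rho_sup G < top" by (simp add: top.not_eq_extremum)
  define c where "c = p * (\<nu> - 1) / (\<nu> - p) * rho_factor G p"
  have "0 \<le> c" using p by (simp add: c_def rho_factor_def)
  show ?thesis
  proof (cases "N = 0")
    case False
    then have "0 < N" using \<open>0 \<le> N\<close> by simp
    have "I \<noteq> top"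
    proof
      assume "I = top"
      define K where "K = (c * g + 1) / N"
      have "0 < K" using \<open>0 < N\<close> \<open>0 \<le> c\<close> \<open>0 \<le> g\<close> by (simp add: K_def add_nonneg_pos)
      then have "K * N \<le> c * g" using bound[of K] rho \<open>I = top\<close> by (simp add: c_def)
      then show False using \<open>0 < N\<close> by (simp add: K_def)
    qed
    then obtain K where I: "I = ennreal K" "0 \<le> K" by (cases I) auto
    show ?thesis
    proof (cases "K = 0")
      case False
      then have "0 < K" using \<open>0 \<le> K\<close> by simp
      then have "K * N \<le> c * g" using bound rho I by (simp add: c_def)
      then have "0 < c" using \<open>0 < K\<close> \<open>0 < N\<close> \<open>0 \<le> c\<close> \<open>0 \<le> g\<close>
        by (metis mult_pos_pos mult_zero_left not_less order.not_eq_order_implies_strict)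
      moreover have "0 < p * (\<nu> - 1) / (\<nu> - p)" using p by simp
      ultimately have "0 < rho_factor G p" unfolding c_def by (metis zero_less_mult_iff not_less_iff_gr_or_eq)
      have "sob_const I G \<nu> p = ennreal K * ennreal (inverse (rho_factor G p)) * ennreal ((\<nu> - p) / (p * (\<nu> - 1)))"
      proof -
        have "p = 1 \<or> rho_sup G < top" using rho p by fastforce
        then show ?thesis
          using \<open>0 < rho_factor G p\<close> by (simp add: sob_const_def I epow_rho_sup_eq inverse_ennreal)
      qed
      also have "\<dots> = ennreal (K / c)"
        using \<open>0 \<le> K\<close> \<open>0 < rho_factor G p\<close> p
        by (simp add: c_def field_simps flip: ennreal_mult)
      finally have "sob_const I G \<nu> p * ennreal N = ennreal (K * N / c)"
        using \<open>0 \<le> K\<close> \<open>0 < c\<close> \<open>0 \<le> N\<close> by (simp flip: ennreal_mult)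
      also have "\<dots> \<le> ennreal g"
        using \<open>K * N \<le> c * g\<close> \<open>0 < c\<close> by (intro ennreal_leI) (simp add: divide_le_eq mult.commute)
      finally show ?thesis .
    qed (simp add: I sob_const_def)
  qed simp
qed

theorem mainTheorem7:
  fixes G :: "('v, 'e) mgraph" and \<nu> p :: real and \<phi> :: "('v, 'e) gpoint \<Rightarrow> real"
  assumes "is_graph G" and "1 \<le> p" and "p < \<nu>" and "C1_Dir G \<phi>"
  shows "sob_const (Iso G \<nu>) G \<nu> p * ennreal (vnorm G (p * \<nu> / (\<nu> - p)) \<phi>)
           \<le> ennreal (grad_norm G p \<phi>)
       \<and> (closed_graph G \<longrightarrow> split_fun G \<phi> \<longrightarrow>
         sob_const (Iso_tilde G \<nu>) G \<nu> p * ennreal (vnorm G (p * \<nu> / (\<nu> - p)) \<phi>)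
           \<le> ennreal (grad_norm G p \<phi>))"
proof -
  have norms: "0 \<le> vnorm G (p * \<nu> / (\<nu> - p)) \<phi>" "0 \<le> grad_norm G p \<phi>"
    by (simp_all add: vnorm_def grad_norm_def)
  show ?thesis
    using sob_const_mult_le[OF assms(2,3) norms] sobolev_Iso[OF assms(1,4,2,3)]
      sobolev_Iso_tilde[OF assms(1,4,2,3)]
    by blast
qed

end
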